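(* (1) For any $\Delta$-set $X$, the realisations $|X|$ and $|Sd_{\square}(X)|$ are homeomorphic. (2) For any $\square$-set $C$, the realisations $|C|$ and $|Sd_{\Delta}(C)|$ are homeomorphic.
   Context: A $\square$-set $C$ consists of sets $C_n$ ($n\ge 0$) and face maps $\partial_i^\epsilon\colon C_n\to C_{n-1}$ ($1\le i\le n$, $\epsilon\in\{0,1\}$) with $\partial^\eta_{j-1}\partial^\epsilon_i=\partial^\epsilon_i\partial^\eta_j$ for $1\le i<j\le n$. Equivalently it is a contravariant functor from the category whose objects are the cubes $I^n=[0,1]^n$ and whose morphisms are the face maps $\lambda\colon I^p\to I^n$ (maps which keep the order of the coordinates $(x_1,\dots,x_p)$ and insert $n-p$ constant coordinates equal to $0$ or $1$); $\lambda^*\colon C_n\to C_p$ denotes the induced map. A face map is a front (resp. back) face map if it inserts only $0$'s (resp. only $1$'s); every face map $\nu$ factors uniquely as $\nu=\lambda'\circ\mu'$ with $\lambda'$ front and $\mu'$ back (front–back decomposition). The realisation $|C|$ is $\coprod_n C_n\times I^n$ modulo $(\lambda^*x,t)\sim(x,\lambda t)$. A $\Delta$-set $X$ consists of sets $X_n$ and face maps $\partial_i\colon X_n\to X_{n-1}$, $0\le i\le n$, with $\partial_i\partial_j=\partial_{j-1}\partial_i$ for $i<j$; equivalently a contravariant functor on standard simplices $\Delta^n=\{x\in\mathbb{R}^{n+1}: x_i\ge 0,\ \sum x_i=1\}$ and their order-preserving face inclusions; its realisation is $\coprod X_n\times\Delta^n$ modulo the analogous identifications. $Sd_\Delta(C)$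 is the $\Delta$-set whose $k$-simplices are tuples $(c,\lambda_1,\dots,\lambda_k)$ with $c\in C_n$, $\lambda_i\colon I^{n_{i-1}}\to I^{n_i}$ face maps, $n_0<n_1<\dots<n_k=n$, with faces $\partial_0(c,\lambda_1,\dots,\lambda_k)=(c,\lambda_2,\dots,\lambda_k)$, $\partial_i(c,\lambda_1,\dots,\lambda_k)=(c,\lambda_1,\dots,\lambda_{i-1},\lambda_{i+1}\lambda_i,\lambda_{i+2},\dots,\lambda_k)$ for $0<i<k$, and $\partial_k(c,\lambda_1,\dots,\lambda_k)=(\lambda_k^*c,\lambda_1,\dots,\lambda_{k-1})$. $Sd_\square(X)$ is the $\square$-set with $Sd_\square(X)_k=\coprod_{n>k}X_{n-1}\times B(k,n)$, where $B(k,n)$ is the set of back face maps $I^k\to I^n$. For a front face map $\lambda'\colon I^t\to I^n$ let $r(\lambda')\colon\Delta^{t-1}\to\Delta^{n-1}$ be its restriction (a simplicial face map, $\Delta^{t-1}\subset I^t$). For $x\in X_{n-1}$, $\lambda\in B(k,n)$ and a face map $\mu\colon I^s\to I^k$, write the front–back decomposition $\lambda\mu=\lambda'\mu'$ and set $\mu^*(x,\lambda)=(r(\lambda')^*x,\mu')$. *)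

theory Defs
  imports "HOL-Analysis.Analysis"
begin

text \<open>A face map (cubical or simplicial) is encoded as a list whose length is the number of
coordinates of the target; entry None is a free coordinate (filled, in order, by the
coordinates of the source), entry Some c is an inserted constant.
Cubical face maps I^p to I^n: bool option list of length n with p Nones
(Some False = inserted 0, Some True = inserted 1).
Simplicial face maps Delta^p to Delta^n (order preserving inclusions): unit option list of
length n+1 with p+1 Nones (Some () = inserted barycentric coordinate 0, i.e. a vertex not hit).\<close>

definition fdim :: "'c option list \<Rightarrow> nat" where
  "fdim l = length (filter (\<lambda>e. e = None) l)"

text \<open>Composition: fcomp l m is the composite l o m.\<close>
fun fcomp :: "'c option list \<Rightarrow> 'c option list \<Rightarrow> 'c option list" where
  "fcomp [] ms = []"
| "fcomp (Some c # ls) ms = Some c # fcomp ls ms"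
| "fcomp (None # ls) ms = (case ms of [] \<Rightarrow> None # fcomp ls [] | m # ms' \<Rightarrow> m # fcomp ls ms')"

text \<open>Points of R^n are functions nat => real vanishing from n on.  fappf l v t applies the
face map l to the point t, the constant c being the real number v c.\<close>
fun fappf :: "'c option list \<Rightarrow> ('c \<Rightarrow> real) \<Rightarrow> (nat \<Rightarrow> real) \<Rightarrow> nat \<Rightarrow> real" where
  "fappf [] v t = (\<lambda>i. 0)"
| "fappf (Some c # ls) v t = (\<lambda>i. if i = 0 then v c else fappf ls v t (i - 1))"
| "fappf (None # ls) v t = (\<lambda>i. if i = 0 then t 0 else fappf ls v (\<lambda>j. t (Suc j)) (i - 1))"

text \<open>Face maps from shape p to shape n; k = 0 for cubes (I^n has n coordinates),
k = 1 for simplices (Delta^n has n+1 coordinates).\<close>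
definition faces_of :: "nat \<Rightarrow> nat \<Rightarrow> nat \<Rightarrow> 'c option list set" where
  "faces_of k p n = {l. length l = n + k \<and> fdim l = p + k}"

abbreviation cface :: "nat \<Rightarrow> nat \<Rightarrow> bool option list set" where
  "cface \<equiv> faces_of 0"

abbreviation sface :: "nat \<Rightarrow> nat \<Rightarrow> unit option list set" where
  "sface \<equiv> faces_of 1"

definition cval :: "bool \<Rightarrow> real" where
  "cval b = (if b then 1 else 0)"

definition sval :: "unit \<Rightarrow> real" where
  "sval u = 0"

definition front_face :: "nat \<Rightarrow> nat \<Rightarrow> bool option list set" where
  "front_face p n = {l \<in> cface p n. \<forall>e \<in> set l. e \<noteq> Some True}"

definition back_face :: "nat \<Rightarrow> nat \<Rightarrow> bool option list set" where
  "back_face p n = {l \<in> cface p n. \<forall>e \<in> set l. e \<noteq> Some False}"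

definition presheaf :: "nat \<Rightarrow> (nat \<Rightarrow> 'a set) \<Rightarrow> ('c option list \<Rightarrow> 'a \<Rightarrow> 'a) \<Rightarrow> bool" where
  "presheaf k S act \<longleftrightarrow>
     (\<forall>p n l x. l \<in> faces_of k p n \<and> x \<in> S n \<longrightarrow> act l x \<in> S p) \<and>
     (\<forall>n x. x \<in> S n \<longrightarrow> act (replicate (n + k) None) x = x) \<and>
     (\<forall>s p n l m x. l \<in> faces_of k p n \<and> m \<in> faces_of k s p \<and> x \<in> S n
         \<longrightarrow> act (fcomp l m) x = act m (act l x))"

definition delta_set :: "(nat \<Rightarrow> 'a set) \<Rightarrow> (unit option list \<Rightarrow> 'a \<Rightarrow> 'a) \<Rightarrow> bool" where
  "delta_set X d \<longleftrightarrow> presheaf 1 X d"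

definition cube_set :: "(nat \<Rightarrow> 'a set) \<Rightarrow> (bool option list \<Rightarrow> 'a \<Rightarrow> 'a) \<Rightarrow> bool" where
  "cube_set C c \<longleftrightarrow> presheaf 0 C c"

definition std_cube :: "nat \<Rightarrow> (nat \<Rightarrow> real) set" where
  "std_cube n = {t. (\<forall>i<n. 0 \<le> t i \<and> t i \<le> 1) \<and> (\<forall>i\<ge>n. t i = 0)}"

definition std_simplex :: "nat \<Rightarrow> (nat \<Rightarrow> real) set" where
  "std_simplex n = {t. (\<forall>i\<le>n. 0 \<le> t i) \<and> (\<forall>i>n. t i = 0) \<and> (\<Sum>i\<le>n. t i) = 1}"

definition quot_top :: "'a topology \<Rightarrow> ('a \<times> 'a) set \<Rightarrow> 'a set topology" where
  "quot_top T R = topology (\<lambda>U. U \<subseteq> topspace T // R \<and> openin T (\<Union>U))"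

definition real_total :: "(nat \<Rightarrow> 'a set) \<Rightarrow> (nat \<Rightarrow> (nat \<Rightarrow> real) set) \<Rightarrow> (nat \<times> 'a \<times> (nat \<Rightarrow> real)) set" where
  "real_total S shape = {(n, x, t). x \<in> S n \<and> t \<in> shape n}"

definition total_top :: "(nat \<Rightarrow> 'a set) \<Rightarrow> (nat \<Rightarrow> (nat \<Rightarrow> real) set) \<Rightarrow> (nat \<times> 'a \<times> (nat \<Rightarrow> real)) topology" where
  "total_top S shape = topology (\<lambda>U. U \<subseteq> real_total S shape \<and>
      (\<forall>n x. x \<in> S n \<longrightarrow> openin (top_of_set (shape n)) {t. (n, x, t) \<in> U}))"

definition real_gen :: "(nat \<Rightarrow> 'a set) \<Rightarrow> (nat \<Rightarrow> (nat \<Rightarrow> real) set) \<Rightarrow> (nat \<Rightarrow> nat \<Rightarrow> 'f set)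
    \<Rightarrow> ('f \<Rightarrow> 'a \<Rightarrow> 'a) \<Rightarrow> ('f \<Rightarrow> (nat \<Rightarrow> real) \<Rightarrow> (nat \<Rightarrow> real))
    \<Rightarrow> ((nat \<times> 'a \<times> (nat \<Rightarrow> real)) \<times> (nat \<times> 'a \<times> (nat \<Rightarrow> real))) set" where
  "real_gen S shape faces act app =
     {((p, act l x, t), (n, x, app l t)) | p n l x t. l \<in> faces p n \<and> x \<in> S n \<and> t \<in> shape p}"

definition realisation :: "(nat \<Rightarrow> 'a set) \<Rightarrow> (nat \<Rightarrow> (nat \<Rightarrow> real) set) \<Rightarrow> (nat \<Rightarrow> nat \<Rightarrow> 'f set)
    \<Rightarrow> ('f \<Rightarrow> 'a \<Rightarrow> 'a) \<Rightarrow> ('f \<Rightarrow> (nat \<Rightarrow> real) \<Rightarrow> (nat \<Rightarrow> real))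
    \<Rightarrow> (nat \<times> 'a \<times> (nat \<Rightarrow> real)) set topology" where
  "realisation S shape faces act app =
     quot_top (total_top S shape) ((real_gen S shape faces act app \<union> (real_gen S shape faces act app)\<inverse>)\<^sup>*)"

definition delta_real :: "(nat \<Rightarrow> 'a set) \<Rightarrow> (unit option list \<Rightarrow> 'a \<Rightarrow> 'a) \<Rightarrow> (nat \<times> 'a \<times> (nat \<Rightarrow> real)) set topology" where
  "delta_real X d = realisation X std_simplex sface d (\<lambda>l. fappf l sval)"

definition cube_real :: "(nat \<Rightarrow> 'a set) \<Rightarrow> (bool option list \<Rightarrow> 'a \<Rightarrow> 'a) \<Rightarrow> (nat \<times> 'a \<times> (nat \<Rightarrow> real)) set topology" where
  "cube_real C c = realisation C std_cube cface c (\<lambda>l. fappf l cval)"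

definition sd_box :: "(nat \<Rightarrow> 'a set) \<Rightarrow> nat \<Rightarrow> ('a \<times> bool option list) set" where
  "sd_box X k = {(x, l). l \<in> back_face k (length l) \<and> k < length l \<and> x \<in> X (length l - 1)}"

text \<open>mu^*(x,l) = (r(l')^* x, mu') where l mu = l' mu' is the front-back decomposition.\<close>
definition front_part :: "bool option list \<Rightarrow> bool option list" where
  "front_part nu = map (\<lambda>e. if e = Some False then Some False else None) nu"

definition back_part :: "bool option list \<Rightarrow> bool option list" where
  "back_part nu = filter (\<lambda>e. e \<noteq> Some False) nu"

text \<open>Restriction r(l') of a front face map to the simplices Delta^(t-1) in I^t.\<close>
definition restr :: "bool option list \<Rightarrow> unit option list" where
  "restr l = map (\<lambda>e. if e = None then None else Some ()) l"

definition sd_box_act :: "(unit option list \<Rightarrow> 'a \<Rightarrow> 'a) \<Rightarrow> bool option list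
    \<Rightarrow> ('a \<times> bool option list) \<Rightarrow> ('a \<times> bool option list)" where
  "sd_box_act d mu xl = (case xl of (x, l) \<Rightarrow>
     (let nu = fcomp l mu in (d (restr (front_part nu)) x, back_part nu)))"

text \<open>k-simplices: (n, c, [l_1,...,l_k]) with c in C n, l_i : I^(n_(i-1)) -> I^(n_i),
n_0 < ... < n_k = n (for k = 0 just (n, c, [])).\<close>
definition sd_delta :: "(nat \<Rightarrow> 'a set) \<Rightarrow> nat \<Rightarrow> (nat \<times> 'a \<times> bool option list list) set" where
  "sd_delta C k = {(n, c, ls). c \<in> C n \<and> length ls = k \<and>
      (\<forall>i<k. fdim (ls ! i) < length (ls ! i)) \<and>
      (\<forall>i. Suc i < k \<longrightarrow> length (ls ! i) = fdim (ls ! Suc i)) \<and>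
      (0 < k \<longrightarrow> length (ls ! (k - 1)) = n)}"

text \<open>cmpn ls a m = l_(a+m+1) o ... o l_(a+1)  (0-indexed list entries ls!a .. ls!(a+m)).\<close>
primrec cmpn :: "bool option list list \<Rightarrow> nat \<Rightarrow> nat \<Rightarrow> bool option list" where
  "cmpn ls a 0 = ls ! a"
| "cmpn ls a (Suc m) = fcomp (ls ! (a + Suc m)) (cmpn ls a m)"

definition hits :: "unit option list \<Rightarrow> nat list" where
  "hits l = [j \<leftarrow> [0..<length l]. l ! j = None]"

text \<open>Action of a general simplicial face inclusion l : Delta^p -> Delta^k (hitting vertices
j_0 < ... < j_p) on a k-simplex: keep the objects n_(j_0),...,n_(j_p) with the composite
maps between them, and restrict c along the composite n_(j_p) -> n_k.  On the elementary
faces this is exactly the formula for d_0, d_i, d_k of the paper.\<close>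
definition sd_delta_act :: "(bool option list \<Rightarrow> 'a \<Rightarrow> 'a) \<Rightarrow> unit option list
    \<Rightarrow> (nat \<times> 'a \<times> bool option list list) \<Rightarrow> (nat \<times> 'a \<times> bool option list list)" where
  "sd_delta_act c l s = (case s of (n, x, ls) \<Rightarrow>
     (let k = length ls; js = hits l; p = length js - 1; jp = last js in
      (if jp = k then n else fdim (ls ! jp),
       if jp = k then x else c (cmpn ls jp (k - jp - 1)) x,
       map (\<lambda>a. cmpn ls (js ! a) (js ! Suc a - js ! a - 1)) [0..<p])))"

end

theory Submission
  imports Defs
begin

text \<open>
Both homeomorphisms come from one criterion: a map between the disjoint unions of cells
which is continuous on each cell, respects the face identifications, reflects them, and covers
every target cell by finitely many compact cell images induces a homeomorphism of the
realisations.  Reflection is checked on normal forms: every point of a realisation is identified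
with a unique point in the interior of a cell, obtained by splitting off the coordinates which
take vertex values (0 and 1 for cubes, 0 for simplices).

For \<open>Sd\<^sub>\<box>(X)\<close>, the cube of \<open>(x, \<lambda>)\<close> with \<open>\<lambda> : I\<^sup>k \<rightarrow> I\<^sup>n\<close> a back face map is sent to the
simplex of \<open>x \<in> X\<^sub>n\<^sub>-\<^sub>1\<close> by \<open>t \<mapsto> \<lambda>(t) / \<Sum>\<lambda>(t)\<close>.  Since \<open>\<lambda>\<close> inserts a coordinate 1, the sum is at
least 1, and an interior point of the simplex comes from exactly one interior point of a cube:
its rescaling with maximal coordinate 1.

For \<open>Sd\<^sub>\<Delta>(C)\<close>, vertex j of the simplex \<open>(c, \<lambda>\<^sub>1, \<dots>, \<lambda>\<^sub>k)\<close> is sent to the centre of the face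
\<open>\<lambda>\<^sub>k \<circ> \<dots> \<circ> \<lambda>\<^sub>j\<^sub>+\<^sub>1\<close> of \<open>I\<^sup>n\<close>, and the map is extended affinely.  Coordinate i of the image of
\<open>s\<close> is \<open>1/2 \<plusminus> (s\<^sub>0 + \<dots> + s\<^sub>m\<^sub>-\<^sub>1)/2\<close>, where m is the first level at which coordinate i is free.
Hence the distinct values of \<open>|2 t\<^sub>i - 1|\<close> are the partial sums of the barycentric coordinates,
which recovers both the chain of face maps and the point.
\<close>

section \<open>Quotient and disjoint-union topologies\<close>

lemma istopology_quot_top:
  assumes eq: "equiv UNIV R"
  shows "istopology (\<lambda>U. U \<subseteq> topspace T // R \<and> openin T (\<Union>U))"
proof -
  have "U \<inter> V \<subseteq> topspace T // R \<and> openin T (\<Union>(U \<inter> V))"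
    if U: "U \<subseteq> topspace T // R \<and> openin T (\<Union>U)"
      and V: "V \<subseteq> topspace T // R \<and> openin T (\<Union>V)" for U V
  proof -
    have "\<Union>U \<inter> \<Union>V \<subseteq> \<Union>(U \<inter> V)"
    proof
      fix z assume "z \<in> \<Union>U \<inter> \<Union>V"
      then obtain A B where AB: "A \<in> U" "B \<in> V" "z \<in> A" "z \<in> B" by blast
      have "A \<in> UNIV // R" "B \<in> UNIV // R" using AB U V unfolding quotient_def by auto
      then have "A = B" using AB quotient_disj[OF eq] by (metis IntI empty_iff)
      then show "z \<in> \<Union>(U \<inter> V)" using AB by blast
    qed
    then have "\<Union>(U \<inter> V) = \<Union>U \<inter> \<Union>V" by blast
    then show ?thesis using U V by auto
  qed
  moreover have "\<Union>K \<subseteq> topspace T // R \<and> openin T (\<Union>(\<Union>K))"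
    if "\<forall>U\<in>K. U \<subseteq> topspace T // R \<and> openin T (\<Union>U)" for K
  proof -
    have "\<Union>(\<Union>K) = \<Union>((\<lambda>U. \<Union>U) ` K)" by auto
    moreover have "openin T (\<Union>((\<lambda>U. \<Union>U) ` K))" using that by (intro openin_Union) auto
    ultimately show ?thesis using that by auto
  qed
  ultimately show ?thesis unfolding istopology_def by (intro conjI allI impI; simp only:)
qed

lemma openin_quot_top:
  "equiv UNIV R \<Longrightarrow> openin (quot_top T R) U \<longleftrightarrow> U \<subseteq> topspace T // R \<and> openin T (\<Union>U)"
  unfolding quot_top_def by (simp add: istopology_quot_top)

lemma topspace_quot_top:
  assumes eq: "equiv UNIV R" and cl: "R `` topspace T \<subseteq> topspace T"
  shows "topspace (quot_top T R) = topspace T // R"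
proof -
  have "\<Union>(topspace T // R) = topspace T"
    using cl eq unfolding quotient_def by (auto simp: equiv_def refl_on_def)
  then have "openin (quot_top T R) (topspace T // R)" using openin_quot_top[OF eq] by simp
  moreover have "topspace (quot_top T R) \<subseteq> topspace T // R"
    using openin_quot_top[OF eq] by (metis openin_topspace)
  ultimately show ?thesis using openin_subset by blast
qed

lemma continuous_map_quot_top_class:
  assumes eq: "equiv UNIV R" and cl: "R `` topspace T \<subseteq> topspace T"
  shows "continuous_map T (quot_top T R) (\<lambda>z. R``{z})"
  unfolding continuous_map_def
proof (intro conjI allI impI)
  show "(\<lambda>z. R``{z}) \<in> topspace T \<rightarrow> topspace (quot_top T R)"
    unfolding topspace_quot_top[OF eq cl] quotient_def by auto
  fix U assume "openin (quot_top T R) U"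
  then have U: "U \<subseteq> topspace T // R" "openin T (\<Union>U)" using openin_quot_top[OF eq] by auto
  have "{z \<in> topspace T. R``{z} \<in> U} = \<Union>U"
  proof
    show "{z \<in> topspace T. R``{z} \<in> U} \<subseteq> \<Union>U"
      using eq by (auto simp: equiv_def refl_on_def)
    show "\<Union>U \<subseteq> {z \<in> topspace T. R``{z} \<in> U}"
    proof
      fix z assume "z \<in> \<Union>U"
      then obtain A where A: "A \<in> U" "z \<in> A" by blast
      then obtain a where a: "a \<in> topspace T" "A = R``{a}" using U unfolding quotient_def by blast
      then have "R``{z} = A" using A eq by (metis equiv_class_eq_iff Image_singleton_iff UNIV_I)
      moreover have "z \<in> topspace T" using a A cl by blast
      ultimately show "z \<in> {z \<in> topspace T. R``{z} \<in> U}" using A by auto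
    qed
  qed
  then show "openin T {z \<in> topspace T. R``{z} \<in> U}" using U by simp
qed

definition quot_lift :: "('a \<Rightarrow> 'b) \<Rightarrow> 'a set \<Rightarrow> 'b" where
  "quot_lift f U = f (SOME z. z \<in> U)"

lemma quot_lift_class:
  assumes eq: "equiv UNIV R" and resp: "\<And>a b. (a, b) \<in> R \<Longrightarrow> f a = f b"
  shows "quot_lift f (R``{a}) = f a"
proof -
  have "a \<in> R``{a}" using eq by (auto simp: equiv_def refl_on_def)
  then have "(SOME z. z \<in> R``{a}) \<in> R``{a}" by (rule someI)
  then show ?thesis unfolding quot_lift_def using resp by auto
qed

lemma continuous_map_quot_lift:
  assumes eq: "equiv UNIV R" and cl: "R `` topspace T \<subseteq> topspace T"
    and resp: "\<And>a b. (a, b) \<in> R \<Longrightarrow> f a = f b"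
    and cont: "continuous_map T Y f"
  shows "continuous_map (quot_top T R) Y (quot_lift f)"
  unfolding continuous_map_def
proof (intro conjI allI impI)
  note lift = quot_lift_class[OF eq resp]
  show "quot_lift f \<in> topspace (quot_top T R) \<rightarrow> topspace Y"
    unfolding topspace_quot_top[OF eq cl] quotient_def using lift cont
    by (auto simp: continuous_map_def)
  fix V assume V: "openin Y V"
  have "\<Union>{U \<in> topspace (quot_top T R). quot_lift f U \<in> V} = {a \<in> topspace T. f a \<in> V}"
  proof
    show "\<Union>{U \<in> topspace (quot_top T R). quot_lift f U \<in> V} \<subseteq> {a \<in> topspace T. f a \<in> V}"
      unfolding topspace_quot_top[OF eq cl] quotient_def using lift resp cl by fastforce
    show "{a \<in> topspace T. f a \<in> V} \<subseteq> \<Union>{U \<in> topspace (quot_top T R). quot_lift f U \<in> V}"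
    proof
      fix a assume a: "a \<in> {a \<in> topspace T. f a \<in> V}"
      have "a \<in> R``{a}" using eq by (auto simp: equiv_def refl_on_def)
      moreover have "R``{a} \<in> topspace (quot_top T R)"
        using a unfolding topspace_quot_top[OF eq cl] quotient_def by auto
      ultimately show "a \<in> \<Union>{U \<in> topspace (quot_top T R). quot_lift f U \<in> V}"
        using a lift by auto
    qed
  qed
  moreover have "openin T {a \<in> topspace T. f a \<in> V}"
    using cont V by (simp add: continuous_map_def)
  ultimately show "openin (quot_top T R) {U \<in> topspace (quot_top T R). quot_lift f U \<in> V}"
    unfolding openin_quot_top[OF eq] using topspace_quot_top[OF eq cl] by auto
qed

lemma istopology_total_top:
  "istopology (\<lambda>U. U \<subseteq> real_total S shape \<and>
      (\<forall>n x. x \<in> S n \<longrightarrow> openin (top_of_set (shape n)) {t. (n, x, t) \<in> U}))"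
  unfolding istopology_def
proof (rule conjI; intro allI impI)
  fix U V assume U: "U \<subseteq> real_total S shape \<and>
      (\<forall>n x. x \<in> S n \<longrightarrow> openin (top_of_set (shape n)) {t. (n, x, t) \<in> U})"
    and V: "V \<subseteq> real_total S shape \<and>
      (\<forall>n x. x \<in> S n \<longrightarrow> openin (top_of_set (shape n)) {t. (n, x, t) \<in> V})"
  have "{t. (n, x, t) \<in> U \<inter> V} = {t. (n, x, t) \<in> U} \<inter> {t. (n, x, t) \<in> V}" for n x
    by blast
  then show "U \<inter> V \<subseteq> real_total S shape \<and>
      (\<forall>n x. x \<in> S n \<longrightarrow> openin (top_of_set (shape n)) {t. (n, x, t) \<in> U \<inter> V})"
    using U V by (simp add: le_infI1 openin_Int)
next
  fix K assume K: "\<forall>U\<in>K. U \<subseteq> real_total S shape \<and>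
      (\<forall>n x. x \<in> S n \<longrightarrow> openin (top_of_set (shape n)) {t. (n, x, t) \<in> U})"
  have "{t. (n, x, t) \<in> \<Union>K} = \<Union>((\<lambda>U. {t. (n, x, t) \<in> U}) ` K)" for n x
    by blast
  moreover have "openin (top_of_set (shape n)) (\<Union>((\<lambda>U. {t. (n, x, t) \<in> U}) ` K))"
    if "x \<in> S n" for n x
    using K that by (intro openin_Union) blast
  ultimately show "\<Union>K \<subseteq> real_total S shape \<and>
      (\<forall>n x. x \<in> S n \<longrightarrow> openin (top_of_set (shape n)) {t. (n, x, t) \<in> \<Union>K})"
    using K by (simp add: Sup_least)
qed

lemma openin_total_top:
  "openin (total_top S shape) U \<longleftrightarrow> U \<subseteq> real_total S shape \<and>
      (\<forall>n x. x \<in> S n \<longrightarrow> openin (top_of_set (shape n)) {t. (n, x, t) \<in> U})"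
  unfolding total_top_def topology_inverse'[OF istopology_total_top] by simp

lemma topspace_total_top: "topspace (total_top S shape) = real_total S shape"
proof -
  have "openin (total_top S shape) (real_total S shape)"
    unfolding openin_total_top by (auto simp: real_total_def)
  moreover have "topspace (total_top S shape) \<subseteq> real_total S shape"
    using openin_total_top by (metis openin_topspace)
  ultimately show ?thesis using openin_subset by blast
qed

lemma continuous_map_from_total_top:
  assumes "\<And>n x. x \<in> S n \<Longrightarrow> continuous_map (top_of_set (shape n)) Y (\<lambda>t. f (n, x, t))"
  shows "continuous_map (total_top S shape) Y f"
  unfolding continuous_map_def
proof (intro conjI allI impI)
  show "f \<in> topspace (total_top S shape) \<rightarrow> topspace Y"
    unfolding topspace_total_top using assms by (fastforce simp: real_total_def continuous_map_def)
  fix V assume V: "openin Y V"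
  show "openin (total_top S shape) {z \<in> topspace (total_top S shape). f z \<in> V}"
    unfolding openin_total_top topspace_total_top
  proof (intro conjI allI impI)
    fix n x assume x: "x \<in> S n"
    have "{t. (n, x, t) \<in> {z \<in> real_total S shape. f z \<in> V}} =
        {t \<in> topspace (top_of_set (shape n)). f (n, x, t) \<in> V}"
      using x by (auto simp: real_total_def)
    then show "openin (top_of_set (shape n)) {t. (n, x, t) \<in> {z \<in> real_total S shape. f z \<in> V}}"
      using assms[OF x] V by (simp add: continuous_map_def)
  qed auto
qed

lemma continuous_map_into_total_top:
  assumes x: "x \<in> S n"
  shows "continuous_map (top_of_set (shape n)) (total_top S shape) (\<lambda>t. (n, x, t))"
  unfolding continuous_map_def
proof (intro conjI allI impI)
  show "(\<lambda>t. (n, x, t)) \<in> topspace (top_of_set (shape n)) \<rightarrow> topspace (total_top S shape)"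
    unfolding topspace_total_top using x by (auto simp: real_total_def)
  fix U assume "openin (total_top S shape) U"
  then have U: "U \<subseteq> real_total S shape" "openin (top_of_set (shape n)) {t. (n, x, t) \<in> U}"
    using x unfolding openin_total_top by auto
  have "{t \<in> topspace (top_of_set (shape n)). (n, x, t) \<in> U} = {t. (n, x, t) \<in> U}"
    using U(1) by (auto simp: real_total_def)
  then show "openin (top_of_set (shape n)) {t \<in> topspace (top_of_set (shape n)). (n, x, t) \<in> U}"
    using U(2) by simp
qed

lemma continuous_map_from_compact_cover:
  fixes \<phi> :: "'i \<Rightarrow> 'a::topological_space \<Rightarrow> 'b::metric_space"
  assumes fin: "finite I"
    and cpt: "\<And>i. i \<in> I \<Longrightarrow> compact (K i)"
    and cont: "\<And>i. i \<in> I \<Longrightarrow> continuous_on (K i) (\<phi> i)"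
    and into: "\<And>i. i \<in> I \<Longrightarrow> \<phi> i ` K i \<subseteq> S"
    and cover: "S \<subseteq> (\<Union>i\<in>I. \<phi> i ` K i)"
    and comp: "\<And>i. i \<in> I \<Longrightarrow> continuous_map (top_of_set (K i)) Y (f \<circ> \<phi> i)"
  shows "continuous_map (top_of_set S) Y f"
proof (rule pasting_lemma_closed[OF fin, where T = "\<lambda>i. \<phi> i ` K i" and f = "\<lambda>i. f"])
  fix i assume i: "i \<in> I"
  have cpt_img: "compact (\<phi> i ` K i)" using compact_continuous_image[OF cont cpt] i by blast
  then show "closedin (top_of_set S) (\<phi> i ` K i)"
    using into[OF i] compact_imp_closed[OF cpt_img] by (simp add: closed_subset)
  have sub: "subtopology (top_of_set S) (\<phi> i ` K i) = top_of_set (\<phi> i ` K i)"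
    using into[OF i] by (simp add: subtopology_subtopology Int_absorb1)
  have "quotient_map (top_of_set (K i)) (top_of_set (\<phi> i ` K i)) (\<phi> i)"
  proof (rule continuous_imp_quotient_map)
    show "continuous_map (top_of_set (K i)) (top_of_set (\<phi> i ` K i)) (\<phi> i)"
      using cont[OF i] by simp
    show "compact_space (top_of_set (K i))"
      using cpt[OF i] by (simp add: compact_space_subtopology)
    show "Hausdorff_space (top_of_set (\<phi> i ` K i))"
      by (simp add: Hausdorff_space_subtopology)
  qed simp
  then show "continuous_map (subtopology (top_of_set S) (\<phi> i ` K i)) Y f"
    unfolding sub using continuous_compose_quotient_map comp[OF i] by blast
next
  fix t assume "t \<in> topspace (top_of_set S)"
  then have "t \<in> S" by simp
  then obtain j where "j \<in> I" "t \<in> \<phi> j ` K j" using cover by blast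
  then show "\<exists>j. j \<in> I \<and> t \<in> \<phi> j ` K j \<and> f t = f t" by blast
qed auto

section \<open>Realisations\<close>

definition real_rel :: "(nat \<Rightarrow> 'a set) \<Rightarrow> (nat \<Rightarrow> (nat \<Rightarrow> real) set) \<Rightarrow> (nat \<Rightarrow> nat \<Rightarrow> 'f set)
    \<Rightarrow> ('f \<Rightarrow> 'a \<Rightarrow> 'a) \<Rightarrow> ('f \<Rightarrow> (nat \<Rightarrow> real) \<Rightarrow> (nat \<Rightarrow> real))
    \<Rightarrow> ((nat \<times> 'a \<times> (nat \<Rightarrow> real)) \<times> (nat \<times> 'a \<times> (nat \<Rightarrow> real))) set" where
  "real_rel S shape faces act app = (real_gen S shape faces act app \<union> (real_gen S shape faces act app)\<inverse>)\<^sup>*"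

lemma realisation_real_rel:
  "realisation S shape faces act app = quot_top (total_top S shape) (real_rel S shape faces act app)"
  unfolding realisation_def real_rel_def by simp

lemma equiv_real_rel: "equiv UNIV (real_rel S shape faces act app)"
proof -
  let ?G = "real_gen S shape faces act app"
  have "sym (?G \<union> ?G\<inverse>)" by (auto simp: sym_def)
  then show ?thesis unfolding real_rel_def equiv_def
    by (auto simp: refl_on_def sym_rtrancl trans_rtrancl)
qed

lemma real_rel_closed:
  assumes "\<And>p n l x t. l \<in> faces p n \<Longrightarrow> x \<in> S n \<Longrightarrow> t \<in> shape p \<Longrightarrow>
      act l x \<in> S p \<and> app l t \<in> shape n"
  shows "real_rel S shape faces act app `` real_total S shape \<subseteq> real_total S shape"
proof -
  let ?G = "real_gen S shape faces act app"
  have "b \<in> real_total S shape" if "(a, b) \<in> (?G \<union> ?G\<inverse>)\<^sup>*" "a \<in> real_total S shape" for a b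
    using that
  proof (induction rule: rtrancl_induct)
    case (step b c)
    then show ?case using assms unfolding real_gen_def real_total_def by blast
  qed
  then show ?thesis unfolding real_rel_def by blast
qed

lemma real_relI:
  "l \<in> faces p n \<Longrightarrow> x \<in> S n \<Longrightarrow> t \<in> shape p \<Longrightarrow>
    ((p, act l x, t), (n, x, app l t)) \<in> real_rel S shape faces act app"
  unfolding real_rel_def real_gen_def by blast

lemma real_rel_map:
  assumes "(a, b) \<in> real_rel S shape faces act app"
    and "\<And>p n l x t. l \<in> faces p n \<Longrightarrow> x \<in> S n \<Longrightarrow> t \<in> shape p \<Longrightarrow>
           (F (p, act l x, t), F (n, x, app l t)) \<in> Q"
    and Q: "equiv UNIV Q"
  shows "(F a, F b) \<in> Q"
proof -
  let ?G = "real_gen S shape faces act app"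
  have "(a, b) \<in> (?G \<union> ?G\<inverse>)\<^sup>*" using assms(1) unfolding real_rel_def .
  then show ?thesis
  proof (induction rule: rtrancl_induct)
    case base then show ?case using Q by (auto simp: equiv_def refl_on_def)
  next
    case (step b c)
    have "(F b, F c) \<in> Q \<or> (F c, F b) \<in> Q"
      using step(2) assms(2) unfolding real_gen_def by blast
    then have "(F b, F c) \<in> Q" using Q by (meson equiv_def symE)
    then show ?case using step(3) Q by (meson equiv_def transE)
  qed
qed

lemma reflect_by_normal_forms:
  assumes eqA: "equiv UNIV RA" and eqB: "equiv UNIV RB"
    and resp: "\<And>a b. (a, b) \<in> RA \<Longrightarrow> (F a, F b) \<in> RB"
    and normal: "\<And>a. a \<in> A \<Longrightarrow> \<exists>a'. P a' \<and> (a', a) \<in> RA"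
    and \<kappa>: "\<And>u v. (u, v) \<in> RB \<Longrightarrow> \<kappa> u = \<kappa> v"
    and fixed: "\<And>a. P a \<Longrightarrow> \<kappa> (F a) = F a"
    and inj: "\<And>a b. P a \<Longrightarrow> P b \<Longrightarrow> F a = F b \<Longrightarrow> a = b"
    and ab: "a \<in> A" "b \<in> A" "(F a, F b) \<in> RB"
  shows "(a, b) \<in> RA"
proof -
  obtain a' b' where a': "P a'" "(a', a) \<in> RA" and b': "P b'" "(b', b) \<in> RA"
    using normal ab by blast
  have "(F a', F a) \<in> RB" "(F b, F b') \<in> RB"
    using resp[OF a'(2)] resp[OF b'(2)] eqB by (auto elim: equivE symE)
  then have "(F a', F b') \<in> RB" using ab(3) eqB by (meson equivE transE)
  then have "a' = b'" using \<kappa> fixed inj a'(1) b'(1) by metis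
  then show ?thesis using a'(2) b'(2) eqA by (meson equivE symE transE)
qed

locale cell_map =
  fixes SA :: "nat \<Rightarrow> 'a set" and shA facesA actA appA
    and SB :: "nat \<Rightarrow> 'b set" and shB facesB actB appB
    and fc :: "nat \<Rightarrow> 'a \<Rightarrow> nat \<times> 'b" and fphi :: "nat \<Rightarrow> 'a \<Rightarrow> (nat \<Rightarrow> real) \<Rightarrow> (nat \<Rightarrow> real)"
    and F :: "nat \<times> 'a \<times> (nat \<Rightarrow> real) \<Rightarrow> nat \<times> 'b \<times> (nat \<Rightarrow> real)"
  assumes F_def: "\<And>n x t. F (n, x, t) = (fst (fc n x), snd (fc n x), fphi n x t)"
    and validA: "\<And>p n l x t. l \<in> facesA p n \<Longrightarrow> x \<in> SA n \<Longrightarrow> t \<in> shA p \<Longrightarrow>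
        actA l x \<in> SA p \<and> appA l t \<in> shA n"
    and validB: "\<And>p n l x t. l \<in> facesB p n \<Longrightarrow> x \<in> SB n \<Longrightarrow> t \<in> shB p \<Longrightarrow>
        actB l x \<in> SB p \<and> appB l t \<in> shB n"
    and cell: "\<And>n x. x \<in> SA n \<Longrightarrow> snd (fc n x) \<in> SB (fst (fc n x))"
    and into: "\<And>n x t. x \<in> SA n \<Longrightarrow> t \<in> shA n \<Longrightarrow> fphi n x t \<in> shB (fst (fc n x))"
    and cont: "\<And>n x. x \<in> SA n \<Longrightarrow> continuous_on (shA n) (fphi n x)"
    and resp: "\<And>p n l x t. l \<in> facesA p n \<Longrightarrow> x \<in> SA n \<Longrightarrow> t \<in> shA p \<Longrightarrow>
        (F (p, actA l x, t), F (n, x, appA l t)) \<in> real_rel SB shB facesB actB appB"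
    and reflect: "\<And>a b. a \<in> real_total SA shA \<Longrightarrow> b \<in> real_total SA shA \<Longrightarrow>
        (F a, F b) \<in> real_rel SB shB facesB actB appB \<Longrightarrow> (a, b) \<in> real_rel SA shA facesA actA appA"
    and fibres: "\<And>m y. y \<in> SB m \<Longrightarrow> finite {(n, x). x \<in> SA n \<and> fc n x = (m, y)}"
    and cover: "\<And>m y u. y \<in> SB m \<Longrightarrow> u \<in> shB m \<Longrightarrow>
        \<exists>n x s. x \<in> SA n \<and> fc n x = (m, y) \<and> s \<in> shA n \<and> fphi n x s = u"
    and compact: "\<And>n. compact (shA n)"
begin

abbreviation "RA \<equiv> real_rel SA shA facesA actA appA"
abbreviation "RB \<equiv> real_rel SB shB facesB actB appB"
abbreviation "QA \<equiv> quot_top (total_top SA shA) RA"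
abbreviation "QB \<equiv> quot_top (total_top SB shB) RB"

lemma closedA: "RA `` topspace (total_top SA shA) \<subseteq> topspace (total_top SA shA)"
  unfolding topspace_total_top using validA by (rule real_rel_closed)

lemma closedB: "RB `` topspace (total_top SB shB) \<subseteq> topspace (total_top SB shB)"
  unfolding topspace_total_top using validB by (rule real_rel_closed)

lemma continuous_map_class_F: "continuous_map (total_top SA shA) QB (\<lambda>a. RB `` {F a})"
proof (rule continuous_map_from_total_top)
  fix n x assume x: "x \<in> SA n"
  have "continuous_map (top_of_set (shA n)) (top_of_set (shB (fst (fc n x)))) (fphi n x)"
    using cont[OF x] into[OF x] by auto
  moreover have "continuous_map (top_of_set (shB (fst (fc n x)))) (total_top SB shB)
      (\<lambda>t. (fst (fc n x), snd (fc n x), t))"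
    using cell[OF x] by (intro continuous_map_into_total_top)
  ultimately have "continuous_map (top_of_set (shA n)) QB
      ((\<lambda>z. RB `` {z}) \<circ> (\<lambda>t. (fst (fc n x), snd (fc n x), t)) \<circ> fphi n x)"
    using continuous_map_quot_top_class[OF equiv_real_rel closedB] by (intro continuous_map_compose) auto
  then show "continuous_map (top_of_set (shA n)) QB (\<lambda>t. RB `` {F (n, x, t)})"
    by (simp add: F_def o_def)
qed

lemma class_F_eq:
  assumes "(a, b) \<in> RA"
  shows "RB `` {F a} = RB `` {F b}"
proof -
  have "(F a, F b) \<in> RB" using assms resp equiv_real_rel by (rule real_rel_map)
  then show ?thesis by (rule equiv_class_eq[OF equiv_real_rel])
qed

definition inv_class :: "nat \<times> 'b \<times> (nat \<Rightarrow> real) \<Rightarrow> (nat \<times> 'a \<times> (nat \<Rightarrow> real)) set" where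
  "inv_class z = RA `` {SOME a. a \<in> real_total SA shA \<and> (F a, z) \<in> RB}"

lemma inv_class_eq: "(z, w) \<in> RB \<Longrightarrow> inv_class z = inv_class w"
proof -
  assume "(z, w) \<in> RB"
  then have "(F c, z) \<in> RB \<longleftrightarrow> (F c, w) \<in> RB" for c
    using equiv_real_rel by (meson equiv_def symE transE)
  then show ?thesis unfolding inv_class_def by simp
qed

lemma inv_class_F: "a \<in> real_total SA shA \<Longrightarrow> inv_class (F a) = RA `` {a}"
proof -
  assume a: "a \<in> real_total SA shA"
  have "(F a, F a) \<in> RB" unfolding real_rel_def by simp
  then have "\<exists>a'. a' \<in> real_total SA shA \<and> (F a', F a) \<in> RB" using a by blast
  then have "(SOME a'. a' \<in> real_total SA shA \<and> (F a', F a) \<in> RB, a) \<in> RA"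
    using someI_ex reflect a by (metis (no_types, lifting))
  then show ?thesis unfolding inv_class_def by (rule equiv_class_eq[OF equiv_real_rel])
qed

text \<open>On a target cell, the inverse is continuous because finitely many compact cell images
cover the cell, and on each of them it is the quotient of a continuous map.\<close>

lemma continuous_map_inv_class: "continuous_map (total_top SB shB) QA inv_class"
proof (rule continuous_map_from_total_top)
  fix m y assume y: "y \<in> SB m"
  let ?I = "{(n, x). x \<in> SA n \<and> fc n x = (m, y)}"
  show "continuous_map (top_of_set (shB m)) QA (\<lambda>t. inv_class (m, y, t))"
  proof (rule continuous_map_from_compact_cover[where I = ?I and K = "\<lambda>(n, x). shA n"
        and \<phi> = "\<lambda>(n, x). fphi n x"])
    show "finite ?I" using fibres[OF y] .
    show "shB m \<subseteq> (\<Union>i\<in>?I. (case i of (n, x) \<Rightarrow> fphi n x) ` (case i of (n, x) \<Rightarrow> shA n))"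
      using cover[OF y] by fastforce
    fix i assume "i \<in> ?I"
    then obtain n x where i: "i = (n, x)" and x: "x \<in> SA n" and fcx: "fc n x = (m, y)" by auto
    show "compact (case i of (n, x) \<Rightarrow> shA n)" using compact i by simp
    show "continuous_on (case i of (n, x) \<Rightarrow> shA n) (case i of (n, x) \<Rightarrow> fphi n x)"
      using cont[OF x] i by simp
    show "(case i of (n, x) \<Rightarrow> fphi n x) ` (case i of (n, x) \<Rightarrow> shA n) \<subseteq> shB m"
      using into[OF x] fcx i by auto
    have "continuous_map (top_of_set (shA n)) QA (\<lambda>s. RA `` {(n, x, s)})"
      using continuous_map_compose[OF continuous_map_into_total_top[of x SA n shA]
          continuous_map_quot_top_class[OF equiv_real_rel closedA]] x
      by (simp add: o_def)
    then have "continuous_map (top_of_set (shA n)) QA ((\<lambda>t. inv_class (m, y, t)) \<circ> fphi n x)"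
    proof (rule continuous_map_eq)
      fix s assume "s \<in> topspace (top_of_set (shA n))"
      then show "RA `` {(n, x, s)} = ((\<lambda>t. inv_class (m, y, t)) \<circ> fphi n x) s"
        using inv_class_F[of "(n, x, s)"] x fcx by (simp add: real_total_def F_def)
    qed
    then show "continuous_map (top_of_set (case i of (n, x) \<Rightarrow> shA n)) QA
        ((\<lambda>t. inv_class (m, y, t)) \<circ> (case i of (n, x) \<Rightarrow> fphi n x))"
      unfolding i by simp
  qed
qed

theorem realisation_homeomorphic_space:
  "realisation SA shA facesA actA appA homeomorphic_space realisation SB shB facesB actB appB"
proof -
  define FF where "FF = quot_lift (\<lambda>a. RB `` {F a})"
  define GG where "GG = quot_lift inv_class"
  have FF_class: "FF (RA `` {a}) = RB `` {F a}" for a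
    unfolding FF_def using quot_lift_class[where R = RA and f = "\<lambda>a. RB `` {F a}", OF equiv_real_rel class_F_eq] by simp
  have GG_class: "GG (RB `` {z}) = inv_class z" for z
    unfolding GG_def using quot_lift_class[where R = RB and f = inv_class, OF equiv_real_rel inv_class_eq] by simp
  have "homeomorphic_maps QA QB FF GG"
    unfolding homeomorphic_maps_def
  proof (intro conjI ballI)
    show "continuous_map QA QB FF"
      unfolding FF_def using continuous_map_quot_lift[OF equiv_real_rel closedA _ continuous_map_class_F]
      class_F_eq by blast
    show "continuous_map QB QA GG"
      unfolding GG_def using continuous_map_quot_lift[OF equiv_real_rel closedB _ continuous_map_inv_class]
      inv_class_eq by blast
    fix U assume "U \<in> topspace QA"
    then obtain a where "a \<in> real_total SA shA" "U = RA `` {a}"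
      unfolding topspace_quot_top[OF equiv_real_rel closedA] topspace_total_top quotient_def by blast
    then show "GG (FF U) = U" using FF_class GG_class inv_class_F by simp
  next
    fix V assume "V \<in> topspace QB"
    then obtain m y u where V: "V = RB `` {(m, y, u)}" "y \<in> SB m" "u \<in> shB m"
      unfolding topspace_quot_top[OF equiv_real_rel closedB] topspace_total_top quotient_def real_total_def
      by blast
    then obtain n x s where nxs: "x \<in> SA n" "fc n x = (m, y)" "s \<in> shA n" "fphi n x s = u"
      using cover by blast
    then have "(m, y, u) = F (n, x, s)" by (simp add: F_def)
    moreover have "(n, x, s) \<in> real_total SA shA" using nxs by (simp add: real_total_def)
    ultimately show "FF (GG V) = V" using V FF_class GG_class inv_class_F by simp
  qed
  then show ?thesis unfolding realisation_real_rel homeomorphic_space_def by blast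
qed

end

lemma fdim_Nil [simp]: "fdim [] = 0" by (simp add: fdim_def)
lemma fdim_None [simp]: "fdim (None # l) = Suc (fdim l)" by (simp add: fdim_def)
lemma fdim_Some [simp]: "fdim (Some c # l) = fdim l" by (simp add: fdim_def)
lemma fdim_Cons: "fdim (a # l) = (if a = None then Suc (fdim l) else fdim l)" by (simp add: fdim_def)
lemma fdim_le: "fdim l \<le> length l" by (simp add: fdim_def)
lemma fdim_replicate_None [simp]: "fdim (replicate n None) = n" by (induction n) auto

lemma fdim_card: "fdim l = card {i. i < length l \<and> l ! i = None}"
  unfolding fdim_def by (rule length_filter_conv_card)

lemma fdim_less_length: "fdim l < length l \<longleftrightarrow> (\<exists>c. Some c \<in> set l)"
proof (induction l)
  case Nil then show ?case by simp
next
  case (Cons a l) then show ?case using fdim_le[of l] by (cases a) auto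
qed

lemma length_fcomp[simp]: "length (fcomp l m) = length l"
  by (induction l m rule: fcomp.induct) (auto split: list.splits)

lemma fdim_fcomp: "length m = fdim l \<Longrightarrow> fdim (fcomp l m) = fdim m"
  by (induction l m rule: fcomp.induct) (auto split: list.splits simp: fdim_Cons)

lemma fcomp_assoc: "length m = fdim l \<Longrightarrow> fcomp (fcomp l m) r = fcomp l (fcomp m r)"
proof (induction l m arbitrary: r rule: fcomp.induct)
  case (3 ls ms)
  then show ?case
  proof (cases ms)
    case (Cons a ms')
    then show ?thesis using 3 by (cases a; cases r) auto
  qed simp
qed auto

lemma fcomp_id_left: "length m = n \<Longrightarrow> fcomp (replicate n None) m = m"
  by (induction n arbitrary: m) (auto simp: length_Suc_conv)

lemma fcomp_id_right: "fcomp l (replicate (fdim l) None) = l"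
proof (induction l)
  case (Cons a l) then show ?case by (cases a) auto
qed simp

lemma fcomp_cancel: "length m = fdim l \<Longrightarrow> length m' = fdim l \<Longrightarrow> fcomp l m = fcomp l m' \<Longrightarrow> m = m'"
proof (induction l arbitrary: m m')
  case (Cons a l)
  show ?case
  proof (cases a)
    case None
    then obtain b ms b' ms' where "m = b # ms" "m' = b' # ms'" using Cons.prems by (cases m; cases m') auto
    then show ?thesis using Cons None by auto
  next
    case (Some c) then show ?thesis using Cons by auto
  qed
qed simp

lemma Some_in_fcomp: "Some c \<in> set l \<Longrightarrow> Some c \<in> set (fcomp l m)"
proof (induction l m rule: fcomp.induct)
  case (3 ls ms) then show ?case by (auto split: list.splits)
qed auto

lemma fcomp_nth_Some: "i < length l \<Longrightarrow> l ! i = Some b \<Longrightarrow> fcomp l m ! i = Some b"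
proof (induction l m arbitrary: i rule: fcomp.induct)
  case (2 c ls ms) then show ?case by (cases i) auto
next
  case (3 ls ms) then show ?case by (cases i) (auto split: list.splits)
qed simp

lemma fappf_beyond: "i \<ge> length l \<Longrightarrow> fappf l v t i = 0"
proof (induction l arbitrary: t i)
  case (Cons a l) then show ?case by (cases a) auto
qed simp

lemma fappf_shift_None: "(\<lambda>j. fappf (None # l) v t (Suc j)) = fappf l v (\<lambda>j. t (Suc j))"
  by simp

lemma fappf_fcomp: "length m = fdim l \<Longrightarrow> fappf (fcomp l m) v t = fappf l v (fappf m v t)"
proof (induction l arbitrary: m t)
  case Nil then show ?case by simp
next
  case (Cons a ls)
  show ?case
  proof (cases a)
    case (Some c)
    then show ?thesis using Cons by (simp add: fun_eq_iff)
  next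
    case None
    then obtain b ms where m: "m = b # ms" using Cons.prems by (cases m) auto
    show ?thesis
    proof (cases b)
      case None
      have "fappf (fcomp ls ms) v (\<lambda>j. t (Suc j)) = fappf ls v (fappf ms v (\<lambda>j. t (Suc j)))"
        using Cons m \<open>a = None\<close> by simp
      then show ?thesis using m None \<open>a = None\<close> by (simp add: fun_eq_iff del: fappf.simps(3) add: fappf.simps(3)[of ms] fappf.simps(3)[of "fcomp ls ms"] fappf.simps(3)[of ls] fappf_shift_None)
    next
      case (Some c)
      have "fappf (fcomp ls ms) v t = fappf ls v (fappf ms v t)"
        using Cons m \<open>a = None\<close> by simp
      then show ?thesis using m Some \<open>a = None\<close> by (simp add: fun_eq_iff)
    qed
  qed
qed

lemma fappf_None_0 [simp]: "fappf (None # l) v t 0 = t 0" by simp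
lemma fappf_None_Suc [simp]: "fappf (None # l) v t (Suc i) = fappf l v (\<lambda>j. t (Suc j)) i" by simp
lemma fappf_Some_0 [simp]: "fappf (Some c # l) v t 0 = v c" by simp
lemma fappf_Some_Suc [simp]: "fappf (Some c # l) v t (Suc i) = fappf l v t i" by simp
declare fappf.simps(2,3) [simp del]

lemma fappf_values: "(\<And>c. Some c \<in> set l \<Longrightarrow> P (v c)) \<Longrightarrow> (\<And>j. j < fdim l \<Longrightarrow> P (t j)) \<Longrightarrow> i < length l \<Longrightarrow> P (fappf l v t i)"
proof (induction l arbitrary: t i)
  case Nil then show ?case by simp
next
  case (Cons a l)
  then show ?case by (cases a; cases i) auto
qed

lemma fappf_nth_Some: "i < length l \<Longrightarrow> l ! i = Some c \<Longrightarrow> fappf l v t i = v c"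
proof (induction l arbitrary: i t)
  case Nil then show ?case by simp
next
  case (Cons a l) then show ?case by (cases a; cases i) auto
qed

lemma fappf_const_None: "i < length l \<Longrightarrow> l ! i = None \<Longrightarrow> fappf l v (\<lambda>_. r) i = r"
proof (induction l arbitrary: i)
  case Nil then show ?case by simp
next
  case (Cons a l) then show ?case by (cases a; cases i) auto
qed

lemma fappf_sum0: "(\<Sum>i<length l. fappf l (\<lambda>_. 0) t i) = (\<Sum>j<fdim l. t j)"
proof (induction l arbitrary: t)
  case Nil then show ?case by simp
next
  case (Cons a l)
  then show ?case by (cases a) (auto simp del: sum.lessThan_Suc simp add: sum.lessThan_Suc_shift)
qed

lemma fappf_scale0: "fappf l (\<lambda>_. 0) (\<lambda>j. r * t j) = (\<lambda>i. r * fappf l (\<lambda>_. 0) t i)"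
proof (induction l arbitrary: t)
  case Nil then show ?case by simp
next
  case (Cons a l)
  show ?case
  proof (rule ext)
    fix i show "fappf (a # l) (\<lambda>_. 0) (\<lambda>j. r * t j) i = r * fappf (a # l) (\<lambda>_. 0) t i"
      using Cons.IH[of "\<lambda>j. t (Suc j)"] Cons.IH[of t] by (cases a; cases i) (auto simp: fun_eq_iff)
  qed
qed

lemma fappf_affine:
  assumes fin: "finite A" and w1: "(\<Sum>a\<in>A. w a) = 1"
  shows "fappf l v (\<lambda>i. \<Sum>a\<in>A. w a * u a i) = (\<lambda>i. \<Sum>a\<in>A. w a * fappf l v (u a) i)"
proof (induction l arbitrary: u)
  case Nil then show ?case by simp
next
  case (Cons e l)
  show ?case
  proof (rule ext)
    fix i
    show "fappf (e # l) v (\<lambda>i. \<Sum>a\<in>A. w a * u a i) i = (\<Sum>a\<in>A. w a * fappf (e # l) v (u a) i)"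
    proof (cases e)
      case None
      then show ?thesis
      proof (cases i)
        case (Suc i')
        have "fappf l v (\<lambda>j. \<Sum>a\<in>A. w a * u a (Suc j)) = (\<lambda>i. \<Sum>a\<in>A. w a * fappf l v (\<lambda>j. u a (Suc j)) i)"
          using Cons.IH[of "\<lambda>a j. u a (Suc j)"] by simp
        then show ?thesis using None Suc by (simp add: fun_eq_iff)
      qed simp
    next
      case (Some c)
      then show ?thesis
      proof (cases i)
        case 0
        have "(\<Sum>a\<in>A. w a * v c) = v c" using w1 by (simp add: sum_distrib_right[symmetric])
        then show ?thesis using Some 0 by simp
      next
        case (Suc i')
        then show ?thesis using Some Cons.IH[of u] by (simp add: fun_eq_iff)
      qed
    qed
  qed
qed

lemma sval_0: "sval = (\<lambda>_. 0)" by (simp add: fun_eq_iff sval_def)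

lemma fappf_std_cube:
  assumes l: "l \<in> cface p n" and t: "t \<in> std_cube p"
  shows "fappf l cval t \<in> std_cube n"
proof -
  have "0 \<le> fappf l cval t i \<and> fappf l cval t i \<le> 1" if "i < n" for i
    using l t that by (intro fappf_values[where P = "\<lambda>r. 0 \<le> r \<and> r \<le> 1"])
      (auto simp: cval_def faces_of_def std_cube_def)
  moreover have "fappf l cval t i = 0" if "i \<ge> n" for i
    using l that by (intro fappf_beyond) (auto simp: faces_of_def)
  ultimately show ?thesis unfolding std_cube_def by auto
qed

lemma fappf_std_simplex:
  assumes l: "l \<in> sface p n" and t: "t \<in> std_simplex p"
  shows "fappf l sval t \<in> std_simplex n"
proof -
  have "0 \<le> fappf l sval t i" if "i \<le> n" for i
    using l t that by (intro fappf_values[where P = "\<lambda>r. 0 \<le> r"])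
      (auto simp: sval_def faces_of_def std_simplex_def)
  moreover have "fappf l sval t i = 0" if "i > n" for i
    using l that by (intro fappf_beyond) (auto simp: faces_of_def)
  moreover have "(\<Sum>i\<le>n. fappf l sval t i) = 1"
  proof -
    have "(\<Sum>i\<le>n. fappf l sval t i) = (\<Sum>i<length l. fappf l sval t i)"
      using l by (simp add: faces_of_def lessThan_Suc_atMost[symmetric])
    also have "\<dots> = (\<Sum>j<fdim l. t j)" unfolding sval_0 by (rule fappf_sum0)
    also have "\<dots> = (\<Sum>j\<le>p. t j)" using l by (simp add: faces_of_def lessThan_Suc_atMost[symmetric])
    finally show ?thesis using t by (simp add: std_simplex_def)
  qed
  ultimately show ?thesis unfolding std_simplex_def by auto
qed

lemma std_cube_PiE: "std_cube n = PiE UNIV (\<lambda>i. if i < n then {0..1} else {0})"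
  unfolding std_cube_def PiE_def Pi_def extensional_def by (auto simp: not_less)

lemma compact_std_cube: "compact (std_cube n)"
proof -
  have "compactin (product_topology (\<lambda>_. euclidean) UNIV) (PiE UNIV (\<lambda>i. if i < n then {0..1::real} else {0}))"
    unfolding compactin_PiE by auto
  then show ?thesis unfolding std_cube_PiE euclidean_product_topology by simp
qed

lemma std_simplex_eq_std_cube_Int: "std_simplex n = std_cube (Suc n) \<inter> {t. (\<Sum>i\<le>n. t i) = 1}"
proof -
  have "t i \<le> 1" if "\<forall>i\<le>n. 0 \<le> t i" "(\<Sum>i\<le>n. t i) = 1" "i \<le> n" for t :: "nat \<Rightarrow> real" and i
  proof -
    have "t i \<le> (\<Sum>i\<le>n. t i)" using that by (intro member_le_sum) auto
    then show ?thesis using that by simp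
  qed
  then show ?thesis unfolding std_simplex_def std_cube_def by (auto simp: less_Suc_eq_le not_le)
qed

lemma compact_std_simplex: "compact (std_simplex n)"
proof -
  have "closed {t::nat\<Rightarrow>real. (\<Sum>i\<le>n. t i) = 1}"
    by (intro closed_Collect_eq continuous_intros continuous_on_product_coordinates)
  then show ?thesis unfolding std_simplex_eq_std_cube_Int using compact_std_cube
    by (intro compact_Int_closed)
qed

lemma continuous_on_shift: "continuous_on UNIV (\<lambda>t::nat\<Rightarrow>real. \<lambda>j. t (Suc j))"
  by (intro continuous_on_coordinatewise_then_product continuous_on_product_coordinates)

lemma continuous_on_fappf_coord: "continuous_on UNIV (\<lambda>t. fappf l v t i)"
proof (induction l arbitrary: i)
  case Nil then show ?case by simp
next
  case (Cons a l)
  show ?case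
  proof (cases a)
    case None
    show ?thesis
    proof (cases i)
      case 0 then show ?thesis using None by simp
    next
      case (Suc i')
      have "continuous_on UNIV ((\<lambda>t. fappf l v t i') \<circ> (\<lambda>t. \<lambda>j. t (Suc j)))"
        using Cons.IH continuous_on_shift by (intro continuous_on_compose) (auto intro: continuous_on_subset)
      then show ?thesis using None Suc by (simp add: o_def)
    qed
  next
    case (Some c)
    then show ?thesis using Cons.IH by (cases i) auto
  qed
qed

text \<open>For a decoder \<open>dec\<close> recognising vertex values, \<open>carrier_face dec N t\<close> is the face map
onto the smallest face containing \<open>t\<close> (vertex-valued coordinates become inserted constants) and
\<open>carrier_coords dec N t\<close> are the remaining coordinates, an interior point of that face.\<close>

primrec carrier_face :: "(real \<Rightarrow> 'c option) \<Rightarrow> nat \<Rightarrow> (nat \<Rightarrow> real) \<Rightarrow> 'c option list" where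
  "carrier_face dec 0 t = []"
| "carrier_face dec (Suc N) t = dec (t 0) # carrier_face dec N (\<lambda>j. t (Suc j))"

primrec carrier_coords :: "(real \<Rightarrow> 'c option) \<Rightarrow> nat \<Rightarrow> (nat \<Rightarrow> real) \<Rightarrow> (nat \<Rightarrow> real)" where
  "carrier_coords dec 0 t = (\<lambda>_. 0)"
| "carrier_coords dec (Suc N) t = (case dec (t 0) of
      None \<Rightarrow> (\<lambda>j. if j = 0 then t 0 else carrier_coords dec N (\<lambda>j. t (Suc j)) (j - 1))
    | Some _ \<Rightarrow> carrier_coords dec N (\<lambda>j. t (Suc j)))"

lemma length_carrier_face[simp]: "length (carrier_face dec N t) = N"
  by (induction N arbitrary: t) auto

lemma carrier_face_nth: "i < N \<Longrightarrow> carrier_face dec N t ! i = dec (t i)"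
  by (induction N arbitrary: t i) (auto simp: nth_Cons split: nat.splits)

lemma carrier_face_set: "e \<in> set (carrier_face dec N t) \<Longrightarrow> \<exists>r. e = dec r"
  by (induction N arbitrary: t) auto

lemma fappf_carrier_face:
  assumes dv: "\<And>c r. dec r = Some c \<Longrightarrow> v c = r"
  shows "(\<forall>i\<ge>N. t i = 0) \<Longrightarrow> fappf (carrier_face dec N t) v (carrier_coords dec N t) = t"
proof (induction N arbitrary: t)
  case 0 then show ?case by (auto simp: fun_eq_iff)
next
  case (Suc N)
  have IH: "fappf (carrier_face dec N (\<lambda>j. t (Suc j))) v (carrier_coords dec N (\<lambda>j. t (Suc j))) = (\<lambda>j. t (Suc j))"
    using Suc by auto
  show ?case
  proof (cases "dec (t 0)")
    case None
    show ?thesis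
    proof (rule ext)
      fix i show "fappf (carrier_face dec (Suc N) t) v (carrier_coords dec (Suc N) t) i = t i"
        using None IH by (cases i) (auto simp: fun_eq_iff)
    qed
  next
    case (Some c)
    show ?thesis
    proof (rule ext)
      fix i show "fappf (carrier_face dec (Suc N) t) v (carrier_coords dec (Suc N) t) i = t i"
        using Some IH dv[OF Some] by (cases i) (auto simp: fun_eq_iff)
    qed
  qed
qed

lemma carrier_face_fappf:
  assumes vd: "\<And>c. dec (v c) = Some c"
  shows "carrier_face dec (length l) (fappf l v t) = fcomp l (carrier_face dec (fdim l) t)"
proof (induction l arbitrary: t)
  case Nil then show ?case by simp
next
  case (Cons a l)
  then show ?case
  proof (cases a)
    case None
    have "carrier_face dec (length l) (fappf l v (\<lambda>j. t (Suc j))) = fcomp l (carrier_face dec (fdim l) (\<lambda>j. t (Suc j)))"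
      using Cons by simp
    then show ?thesis using None by (simp del: carrier_face.simps add: carrier_face.simps(2)[of dec "length l"] carrier_face.simps(2)[of dec "fdim l"])
  next
    case (Some c)
    then show ?thesis using Cons vd by simp
  qed
qed

lemma carrier_coords_fappf:
  assumes vd: "\<And>c. dec (v c) = Some c"
  shows "carrier_coords dec (length l) (fappf l v t) = carrier_coords dec (fdim l) t"
proof (induction l arbitrary: t)
  case Nil then show ?case by simp
next
  case (Cons a l)
  then show ?case
  proof (cases a)
    case None
    have "carrier_coords dec (length l) (fappf l v (\<lambda>j. t (Suc j))) = carrier_coords dec (fdim l) (\<lambda>j. t (Suc j))"
      using Cons by simp
    then show ?thesis using None by (simp split: option.splits add: fun_eq_iff)
  next
    case (Some c)
    then show ?thesis using Cons vd by simp
  qed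
qed

lemma carrier_coords_interior: "j < fdim (carrier_face dec N t) \<Longrightarrow> dec (carrier_coords dec N t j) = None"
proof (induction N arbitrary: t j)
  case 0 then show ?case by simp
next
  case (Suc N)
  then show ?case by (cases "dec (t 0)"; cases j) auto
qed

lemma carrier_coords_beyond: "j \<ge> fdim (carrier_face dec N t) \<Longrightarrow> carrier_coords dec N t j = 0"
proof (induction N arbitrary: t j)
  case 0 then show ?case by simp
next
  case (Suc N)
  then show ?case by (cases "dec (t 0)"; cases j) auto
qed

lemma carrier_coords_values: "(\<And>i. i < N \<Longrightarrow> P (t i)) \<Longrightarrow> j < fdim (carrier_face dec N t) \<Longrightarrow> P (carrier_coords dec N t j)"
proof (induction N arbitrary: t j)
  case 0 then show ?case by simp
next
  case (Suc N)
  then show ?case by (cases "dec (t 0)"; cases j) auto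
qed

lemma sum_carrier_coords:
  assumes "\<And>r c. dec r = Some c \<Longrightarrow> r = 0"
  shows "(\<Sum>j<fdim (carrier_face dec N t). carrier_coords dec N t j) = (\<Sum>i<N. t i)"
proof (induction N arbitrary: t)
  case 0 then show ?case by simp
next
  case (Suc N)
  show ?case
  proof (cases "dec (t 0)")
    case None
    then show ?thesis using Suc[of "\<lambda>j. t (Suc j)"] by (simp del: sum.lessThan_Suc add: sum.lessThan_Suc_shift)
  next
    case (Some c)
    then show ?thesis using Suc[of "\<lambda>j. t (Suc j)"] assms[OF Some] by (simp del: sum.lessThan_Suc add: sum.lessThan_Suc_shift)
  qed
qed

lemma carrier_face_interior: "(\<And>i. i < N \<Longrightarrow> dec (t i) = None) \<Longrightarrow> carrier_face dec N t = replicate N None"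
  by (induction N arbitrary: t) auto

lemma carrier_coords_interior_id: "(\<And>i. i < N \<Longrightarrow> dec (t i) = None) \<Longrightarrow> (\<forall>i\<ge>N. t i = 0) \<Longrightarrow> carrier_coords dec N t = t"
proof (induction N arbitrary: t)
  case 0 then show ?case by auto
next
  case (Suc N)
  have "carrier_coords dec N (\<lambda>j. t (Suc j)) = (\<lambda>j. t (Suc j))" using Suc by auto
  then show ?case using Suc.prems(1)[of 0] by (auto simp: fun_eq_iff split: nat.splits)
qed

definition cval_inv :: "real \<Rightarrow> bool option" where
  "cval_inv r = (if r = 0 then Some False else if r = 1 then Some True else None)"

definition sval_inv :: "real \<Rightarrow> unit option" where
  "sval_inv r = (if r = 0 then Some () else None)"

lemma cval_cval_inv: "cval_inv r = Some c \<Longrightarrow> cval c = r"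
  by (auto simp: cval_inv_def cval_def split: if_splits)

lemma cval_inv_cval: "cval_inv (cval c) = Some c"
  by (cases c) (auto simp: cval_inv_def cval_def)

lemma sval_sval_inv: "sval_inv r = Some c \<Longrightarrow> sval c = r"
  by (auto simp: sval_inv_def sval_def split: if_splits)

lemma sval_inv_sval: "sval_inv (sval c) = Some c"
  by (auto simp: sval_inv_def sval_def)

lemma sval_inv_Some: "sval_inv r = Some c \<Longrightarrow> r = 0"
  by (auto simp: sval_inv_def split: if_splits)

lemma cval_inv_None: "cval_inv r = None \<longleftrightarrow> r \<noteq> 0 \<and> r \<noteq> 1"
  by (auto simp: cval_inv_def)

lemma sval_inv_None: "sval_inv r = None \<longleftrightarrow> r \<noteq> 0"
  by (auto simp: sval_inv_def)

lemma carrier_std_cube: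
  assumes t: "t \<in> std_cube n"
  shows "carrier_face cval_inv n t \<in> cface (fdim (carrier_face cval_inv n t)) n"
    "carrier_coords cval_inv n t \<in> std_cube (fdim (carrier_face cval_inv n t))"
proof -
  show "carrier_face cval_inv n t \<in> cface (fdim (carrier_face cval_inv n t)) n" by (simp add: faces_of_def)
  have "0 \<le> carrier_coords cval_inv n t j \<and> carrier_coords cval_inv n t j \<le> 1" if "j < fdim (carrier_face cval_inv n t)" for j
    using t that by (intro carrier_coords_values[where P = "\<lambda>r. 0 \<le> r \<and> r \<le> 1"]) (auto simp: std_cube_def)
  then show "carrier_coords cval_inv n t \<in> std_cube (fdim (carrier_face cval_inv n t))"
    unfolding std_cube_def using carrier_coords_beyond by auto
qed

lemma carrier_std_simplex:
  assumes t: "t \<in> std_simplex n"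
  shows "1 \<le> fdim (carrier_face sval_inv (n+1) t)"
    "carrier_face sval_inv (n+1) t \<in> sface (fdim (carrier_face sval_inv (n+1) t) - 1) n"
    "carrier_coords sval_inv (n+1) t \<in> std_simplex (fdim (carrier_face sval_inv (n+1) t) - 1)"
proof -
  define L where "L = carrier_face sval_inv (n+1) t"
  define u where "u = carrier_coords sval_inv (n+1) t"
  have sum: "(\<Sum>j<fdim L. u j) = 1"
    unfolding L_def u_def using sum_carrier_coords[of sval_inv "n+1" t] sval_inv_Some t
    by (simp add: std_simplex_def lessThan_Suc_atMost del: carrier_coords.simps carrier_face.simps)
  then show ge: "1 \<le> fdim (carrier_face sval_inv (n+1) t)" unfolding L_def[symmetric] by (cases "fdim L") auto
  then show "carrier_face sval_inv (n+1) t \<in> sface (fdim (carrier_face sval_inv (n+1) t) - 1) n" by (simp add: faces_of_def del: carrier_face.simps)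
  have "0 \<le> u j" if "j < fdim L" for j
    using t that unfolding u_def L_def by (intro carrier_coords_values[where P = "\<lambda>r. 0 \<le> r"]) (auto simp: std_simplex_def)
  moreover have "(\<Sum>j\<le>fdim L - 1. u j) = 1"
    using sum ge unfolding L_def[symmetric] by (metis Suc_diff_1 lessThan_Suc_atMost less_le_trans zero_less_one)
  moreover have "u j = 0" if "j > fdim L - 1" for j
    using that ge unfolding u_def L_def by (intro carrier_coords_beyond) simp
  ultimately have "u \<in> std_simplex (fdim L - 1)"
    unfolding std_simplex_def using ge unfolding L_def[symmetric] by auto
  then show "carrier_coords sval_inv (n+1) t \<in> std_simplex (fdim (carrier_face sval_inv (n+1) t) - 1)" unfolding u_def L_def .
qed

definition carrier_normal :: "nat \<Rightarrow> (real \<Rightarrow> 'c option) \<Rightarrow> ('c option list \<Rightarrow> 'a \<Rightarrow> 'a)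
    \<Rightarrow> nat \<times> 'a \<times> (nat \<Rightarrow> real) \<Rightarrow> nat \<times> 'a \<times> (nat \<Rightarrow> real)" where
  "carrier_normal k dec act z = (case z of (n, x, t) \<Rightarrow>
     (fdim (carrier_face dec (n + k) t) - k, act (carrier_face dec (n + k) t) x, carrier_coords dec (n + k) t))"

lemma carrier_normal_real_gen:
  assumes ps: "presheaf k S act" and vd: "\<And>c. dec (v c) = Some c"
    and shp: "\<And>p t. t \<in> shape p \<Longrightarrow> k \<le> fdim (carrier_face dec (p + k) t)"
    and l: "l \<in> faces_of k p n" and x: "x \<in> S n" and t: "t \<in> shape p"
  shows "carrier_normal k dec act (p, act l x, t) = carrier_normal k dec act (n, x, fappf l v t)"
proof -
  let ?L = "carrier_face dec (p + k) t"
  have len: "length l = n + k" "fdim l = p + k" using l by (auto simp: faces_of_def)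
  have e1: "carrier_face dec (n + k) (fappf l v t) = fcomp l ?L"
    using carrier_face_fappf[OF vd, of l t] len by simp
  have e2: "carrier_coords dec (n + k) (fappf l v t) = carrier_coords dec (p + k) t"
    using carrier_coords_fappf[OF vd, of l t] len by simp
  have e3: "fdim (fcomp l ?L) = fdim ?L" using len by (simp add: fdim_fcomp)
  have Lf: "?L \<in> faces_of k (fdim ?L - k) p" using shp[OF t] by (simp add: faces_of_def)
  have e4: "act (fcomp l ?L) x = act ?L (act l x)"
    using ps l Lf x unfolding presheaf_def by blast
  show ?thesis unfolding carrier_normal_def using e1 e2 e3 e4 by simp
qed

lemma carrier_normal_real_rel:
  assumes ps: "presheaf k S act" and vd: "\<And>c. dec (v c) = Some c"
    and shp: "\<And>p t. t \<in> shape p \<Longrightarrow> k \<le> fdim (carrier_face dec (p + k) t)"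
    and r: "(a, b) \<in> real_rel S shape (faces_of k) act (\<lambda>l. fappf l v)"
  shows "carrier_normal k dec act a = carrier_normal k dec act b"
proof -
  have "(carrier_normal k dec act a, carrier_normal k dec act b) \<in> Id"
    using r by (rule real_rel_map) (auto intro: carrier_normal_real_gen[OF ps vd shp] simp: equiv_def refl_on_def sym_def trans_def)
  then show ?thesis by simp
qed

lemma carrier_normal_interior:
  assumes ps: "presheaf k S act" and x: "x \<in> S n"
    and int: "\<And>i. i < n + k \<Longrightarrow> dec (t i) = None" and van: "\<forall>i\<ge>n + k. t i = 0"
  shows "carrier_normal k dec act (n, x, t) = (n, x, t)"
proof -
  have "carrier_face dec (n + k) t = replicate (n + k) None" using int by (rule carrier_face_interior)
  moreover have "carrier_coords dec (n + k) t = t" using int van by (rule carrier_coords_interior_id)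
  moreover have "act (replicate (n + k) None) x = x" using ps x unfolding presheaf_def by blast
  ultimately show ?thesis unfolding carrier_normal_def by simp
qed

lemma carrier_real_rel:
  assumes dv: "\<And>c r. dec r = Some c \<Longrightarrow> v c = r"
    and lf: "carrier_face dec (n + k) t \<in> faces_of k (fdim (carrier_face dec (n + k) t) - k) n"
    and sh: "carrier_coords dec (n + k) t \<in> shape (fdim (carrier_face dec (n + k) t) - k)"
    and x: "x \<in> S n" and van: "\<forall>i\<ge>n + k. t i = 0"
  shows "((fdim (carrier_face dec (n + k) t) - k, act (carrier_face dec (n + k) t) x, carrier_coords dec (n + k) t), (n, x, t))
           \<in> real_rel S shape (faces_of k) act (\<lambda>l. fappf l v)"
  using real_relI[where l = "carrier_face dec (n + k) t" and faces = "faces_of k" and p = "fdim (carrier_face dec (n + k) t) - k"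
     and n = n and x = x and S = S and t = "carrier_coords dec (n + k) t" and shape = shape and act = act and app = "\<lambda>l. fappf l v", OF lf x sh]
    fappf_carrier_face[where dec = dec and v = v and N = "n + k" and t = t] dv van by simp

section \<open>The cubical subdivision of a \<open>\<Delta>\<close>-set\<close>

lemma fcomp_front_back: "fcomp (front_part nu) (back_part nu) = nu"
proof (induction nu)
  case Nil then show ?case by (simp add: front_part_def back_part_def)
next
  case (Cons a nu) then show ?case by (auto simp: front_part_def back_part_def)
qed

lemma length_front[simp]: "length (front_part nu) = length nu" by (simp add: front_part_def)

lemma fdim_front: "fdim (front_part nu) = length (back_part nu)"
  by (induction nu) (auto simp: front_part_def back_part_def)

lemma fdim_back: "fdim (back_part nu) = fdim nu"
  by (induction nu) (auto simp: back_part_def fdim_Cons)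

lemma length_restr[simp]: "length (restr l) = length l" by (simp add: restr_def)

lemma fdim_restr[simp]: "fdim (restr l) = fdim l"
  by (induction l) (auto simp: restr_def fdim_Cons)

lemma back_no_False: "Some False \<notin> set (back_part nu)" by (simp add: back_part_def)

lemma back_Some: "Some c \<in> set nu \<Longrightarrow> c = True \<Longrightarrow> Some c \<in> set (back_part nu)"
  by (simp add: back_part_def)

lemma cval_False: "cval False = 0" by (simp add: cval_def)

lemma fappf_front_restr: "fappf (front_part nu) cval u = fappf (restr (front_part nu)) sval u"
proof (induction nu arbitrary: u)
  case Nil then show ?case by (simp add: front_part_def restr_def)
next
  case (Cons a nu)
  show ?case
  proof (rule ext)
    fix i
    show "fappf (front_part (a # nu)) cval u i = fappf (restr (front_part (a # nu))) sval u i"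
      using Cons.IH[of u] Cons.IH[of "\<lambda>j. u (Suc j)"]
      by (cases i; cases "a = Some False") (auto simp: front_part_def restr_def cval_False sval_0 fun_eq_iff)
  qed
qed

lemma back_face_no_False: "L \<in> back_face k n \<Longrightarrow> Some False \<notin> set L"
  by (auto simp: back_face_def)

lemma back_face_Some_True:
  assumes "L \<in> back_face k n" "k < n"
  shows "Some True \<in> set L"
proof -
  have "fdim L < length L" using assms by (simp add: back_face_def faces_of_def)
  then obtain c where "Some c \<in> set L" unfolding fdim_less_length ..
  then show ?thesis using back_face_no_False[OF assms(1)] by (cases c) auto
qed

lemma front_back_part_faces:
  assumes L: "L \<in> back_face k (length L)" "k < length L" and l: "l \<in> cface p k"
  shows "restr (front_part (fcomp L l)) \<in> sface (length (back_part (fcomp L l)) - 1) (length L - 1)"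
    "back_part (fcomp L l) \<in> back_face p (length (back_part (fcomp L l)))"
    "p < length (back_part (fcomp L l))"
proof -
  define nu where "nu = fcomp L l"
  have fnu: "fdim nu = p"
    unfolding nu_def using l L(1) by (simp add: fdim_fcomp back_face_def faces_of_def)
  have "Some True \<in> set (back_part nu)"
    using Some_in_fcomp[OF back_face_Some_True[OF L]] unfolding nu_def by (intro back_Some) auto
  then have lt: "p < length (back_part nu)"
    using fdim_less_length[of "back_part nu"] fdim_back[of nu] fnu by auto
  then show "p < length (back_part (fcomp L l))" unfolding nu_def .
  show "back_part (fcomp L l) \<in> back_face p (length (back_part (fcomp L l)))"
    using back_no_False[of nu] fdim_back[of nu] fnu unfolding back_face_def faces_of_def nu_def by auto
  have "length L = Suc (length L - 1)" "length (back_part nu) = Suc (length (back_part nu) - 1)"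
    using lt L(2) by arith+
  then show "restr (front_part (fcomp L l)) \<in> sface (length (back_part (fcomp L l)) - 1) (length L - 1)"
    unfolding nu_def by (simp add: faces_of_def fdim_front)
qed

lemma sd_box_act_closed:
  assumes X: "delta_set X d" and l: "l \<in> cface p k" and xl: "xl \<in> sd_box X k"
  shows "sd_box_act d l xl \<in> sd_box X p"
proof -
  obtain x L where xl_eq: "xl = (x, L)" by (cases xl)
  have L: "L \<in> back_face k (length L)" "k < length L" "x \<in> X (length L - 1)"
    using xl unfolding xl_eq sd_box_def by auto
  note faces = front_back_part_faces[OF L(1,2) l]
  have "d (restr (front_part (fcomp L l))) x \<in> X (length (back_part (fcomp L l)) - 1)"
    using X faces(1) L(3) unfolding delta_set_def presheaf_def by blast
  then show ?thesis using faces(2,3) unfolding xl_eq sd_box_act_def sd_box_def Let_def by simp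
qed

definition normalise :: "nat \<Rightarrow> (nat \<Rightarrow> real) \<Rightarrow> nat \<Rightarrow> real" where
  "normalise N u = (\<lambda>i. u i / (\<Sum>j<N. u j))"

lemma fappf_back_face:
  assumes L: "L \<in> back_face k (length L)" "k < length L" and t: "t \<in> std_cube k"
  shows "\<exists>i<length L. fappf L cval t i = 1"
    "0 \<le> fappf L cval t i" "fappf L cval t i \<le> 1"
    "1 \<le> (\<Sum>j<length L. fappf L cval t j)"
proof -
  obtain i0 where i0: "i0 < length L" "L ! i0 = Some True"
    using back_face_Some_True[OF L] by (auto simp: in_set_conv_nth)
  have one: "fappf L cval t i0 = 1" using fappf_nth_Some[OF i0] by (simp add: cval_def)
  then show "\<exists>i<length L. fappf L cval t i = 1" using i0 by blast
  have "fappf L cval t \<in> std_cube (length L)"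
    using fappf_std_cube[OF _ t] L(1) by (simp add: back_face_def)
  then have b: "0 \<le> fappf L cval t i \<and> fappf L cval t i \<le> 1" for i
    by (cases "i < length L") (simp_all add: std_cube_def)
  then show "0 \<le> fappf L cval t i" "fappf L cval t i \<le> 1" by auto
  have "fappf L cval t i0 \<le> (\<Sum>j<length L. fappf L cval t j)"
    using i0 b by (intro member_le_sum) auto
  then show "1 \<le> (\<Sum>j<length L. fappf L cval t j)" using one by simp
qed

lemma sd_box_cell_in_simplex:
  assumes xl: "(x, L) \<in> sd_box X k" and t: "t \<in> std_cube k"
  shows "normalise (length L) (fappf L cval t) \<in> std_simplex (length L - 1)"
proof -
  have L: "L \<in> back_face k (length L)" "k < length L" using xl by (auto simp: sd_box_def)
  define u where "u = fappf L cval t"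
  define S where "S = (\<Sum>j<length L. u j)"
  have S1: "1 \<le> S" unfolding S_def u_def using fappf_back_face(4)[OF L t] .
  have u0: "0 \<le> u i" for i unfolding u_def using fappf_back_face(2)[OF L t] .
  have ii: "{..length L - 1} = {..<length L}" using L(2) by auto
  have "(\<Sum>i\<le>length L - 1. u i / S) = (\<Sum>i<length L. u i) / S"
    unfolding ii by (simp add: sum_divide_distrib)
  also have "\<dots> = 1" using S1 unfolding S_def by simp
  finally have "(\<Sum>i\<le>length L - 1. u i / S) = 1" .
  moreover have "u i = 0" if "i > length L - 1" for i
    unfolding u_def using that L(2) by (intro fappf_beyond) simp
  ultimately show ?thesis unfolding std_simplex_def normalise_def u_def[symmetric] S_def[symmetric]
    using u0 S1 by auto
qed

lemma continuous_on_sd_box_cell: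
  assumes xl: "(x, L) \<in> sd_box X k"
  shows "continuous_on (std_cube k) (\<lambda>t. normalise (length L) (fappf L cval t))"
proof -
  have L: "L \<in> back_face k (length L)" "k < length L" using xl by (auto simp: sd_box_def)
  have c: "continuous_on (std_cube k) (\<lambda>t. fappf L cval t i)" for i
    using continuous_on_fappf_coord continuous_on_subset by blast
  have nz: "\<forall>t\<in>std_cube k. (\<Sum>j<length L. fappf L cval t j) \<noteq> 0"
    using fappf_back_face(4)[OF L] by fastforce
  show ?thesis unfolding normalise_def
    by (intro continuous_on_coordinatewise_then_product continuous_on_divide continuous_on_sum c nz)
qed

definition sd_box_map :: "nat \<times> ('a \<times> bool option list) \<times> (nat \<Rightarrow> real) \<Rightarrow> nat \<times> 'a \<times> (nat \<Rightarrow> real)" where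
  "sd_box_map z = (case z of (k, (x, L), t) \<Rightarrow> (length L - 1, x, normalise (length L) (fappf L cval t)))"

lemma fappf_front_back_part:
  "fappf nu cval t = fappf (restr (front_part nu)) sval (fappf (back_part nu) cval t)"
proof -
  have "fappf nu cval t = fappf (front_part nu) cval (fappf (back_part nu) cval t)"
    using fappf_fcomp[of "back_part nu" "front_part nu" cval t] fcomp_front_back[of nu]
    by (simp add: fdim_front)
  also have "\<dots> = fappf (restr (front_part nu)) sval (fappf (back_part nu) cval t)"
    by (rule fappf_front_restr)
  finally show ?thesis .
qed

lemma fappf_normalise:
  "fappf lam sval (normalise (fdim lam) w) = normalise (length lam) (fappf lam sval w)"
proof -
  have nw: "normalise (fdim lam) w = (\<lambda>j. inverse (\<Sum>j<fdim lam. w j) * w j)"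
    unfolding normalise_def by (simp add: fun_eq_iff field_simps)
  show ?thesis
    unfolding nw sval_0 fappf_scale0 unfolding normalise_def fappf_sum0 by (simp add: fun_eq_iff field_simps)
qed

lemma sd_box_map_real_rel:
  assumes X: "delta_set X d" and l: "l \<in> cface p k" and xl: "xl \<in> sd_box X k" and t: "t \<in> std_cube p"
  shows "(sd_box_map (p, sd_box_act d l xl, t), sd_box_map (k, xl, fappf l cval t))
    \<in> real_rel X std_simplex sface d (\<lambda>l. fappf l sval)"
proof -
  obtain x L where xl_eq: "xl = (x, L)" by (cases xl)
  have L: "L \<in> back_face k (length L)" "k < length L" "x \<in> X (length L - 1)"
    using xl unfolding xl_eq sd_box_def by auto
  define B where "B = back_part (fcomp L l)"
  define lam where "lam = restr (front_part (fcomp L l))"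
  define w where "w = fappf B cval t"
  have act: "sd_box_act d l (x, L) = (d lam x, B)"
    unfolding sd_box_act_def Let_def lam_def B_def by simp
  have "lam \<in> sface (length B - 1) (length L - 1)"
    using front_back_part_faces(1)[OF L(1,2) l] unfolding lam_def B_def .
  moreover have "normalise (length B) w \<in> std_simplex (length B - 1)"
    unfolding w_def using sd_box_cell_in_simplex[OF sd_box_act_closed[OF X l xl[unfolded xl_eq], unfolded act] t] .
  ultimately have "((length B - 1, d lam x, normalise (length B) w),
      (length L - 1, x, fappf lam sval (normalise (length B) w))) \<in> real_rel X std_simplex sface d (\<lambda>l. fappf l sval)"
    using L(3) by (intro real_relI)
  moreover have "fappf L cval (fappf l cval t) = fappf lam sval w"
    using fappf_fcomp[of l L cval t] l L(1) fappf_front_back_part[of "fcomp L l" t]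
    unfolding lam_def w_def B_def by (simp add: faces_of_def back_face_def)
  moreover have "length lam = length L" "fdim lam = length B"
    unfolding lam_def B_def by (simp_all add: fdim_front)
  ultimately show ?thesis
    unfolding xl_eq act sd_box_map_def using fappf_normalise[of lam w] w_def by simp
qed

lemma carrier_fappf_interior:
  assumes xl: "(x, L) \<in> sd_box X p" and t: "t \<in> std_cube p" and int: "\<And>j. j < p \<Longrightarrow> 0 < t j \<and> t j < 1"
  shows "carrier_face cval_inv (length L) (fappf L cval t) = L" "carrier_coords cval_inv (length L) (fappf L cval t) = t"
proof -
  have fL: "fdim L = p" using xl by (simp add: sd_box_def back_face_def faces_of_def)
  have dn: "cval_inv (t j) = None" if "j < fdim L" for j using int[of j] that fL by (auto simp: cval_inv_def)
  show "carrier_face cval_inv (length L) (fappf L cval t) = L"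
    using carrier_face_fappf[of cval_inv cval L t] cval_inv_cval carrier_face_interior[of "fdim L" cval_inv t] dn fcomp_id_right by metis
  have van: "\<forall>i\<ge>fdim L. t i = 0" using t fL by (simp add: std_cube_def)
  show "carrier_coords cval_inv (length L) (fappf L cval t) = t"
    using carrier_coords_fappf[of cval_inv cval L t] cval_inv_cval carrier_coords_interior_id[of "fdim L" cval_inv t] dn van by metis
qed

lemma sd_box_map_inj_interior:
  assumes a: "(p, (x1, L1), t1) \<in> real_total (sd_box X) std_cube" and b: "(q, (x2, L2), t2) \<in> real_total (sd_box X) std_cube"
    and ia: "\<And>j. j < p \<Longrightarrow> 0 < t1 j \<and> t1 j < 1" and ib: "\<And>j. j < q \<Longrightarrow> 0 < t2 j \<and> t2 j < 1"
    and eq: "sd_box_map (p, (x1, L1), t1) = sd_box_map (q, (x2, L2), t2)"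
  shows "(p, (x1, L1), t1) = (q, (x2, L2), t2)"
proof -
  have A: "(x1, L1) \<in> sd_box X p" "t1 \<in> std_cube p" using a by (auto simp: real_total_def)
  have B: "(x2, L2) \<in> sd_box X q" "t2 \<in> std_cube q" using b by (auto simp: real_total_def)
  have L1: "L1 \<in> back_face p (length L1)" "p < length L1" using A by (auto simp: sd_box_def)
  have L2: "L2 \<in> back_face q (length L2)" "q < length L2" using B by (auto simp: sd_box_def)
  have e: "length L1 - 1 = length L2 - 1" "x1 = x2" "normalise (length L1) (fappf L1 cval t1) = normalise (length L2) (fappf L2 cval t2)"
    using eq by (auto simp: sd_box_map_def)
  have N: "length L1 = length L2" using e(1) L1(2) L2(2) by arith
  define u1 where "u1 = fappf L1 cval t1"
  define u2 where "u2 = fappf L2 cval t2"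
  define S1 where "S1 = (\<Sum>j<length L1. u1 j)"
  define S2 where "S2 = (\<Sum>j<length L1. u2 j)"
  have S1: "1 \<le> S1" unfolding S1_def u1_def using fappf_back_face(4)[OF L1 A(2)] .
  have S2: "1 \<le> S2" unfolding S2_def u2_def using fappf_back_face(4)[OF L2 B(2)] N by simp
  have q: "u1 i / S1 = u2 i / S2" for i using e(3) N unfolding normalise_def u1_def u2_def S1_def S2_def by (metis)
  obtain i1 where i1: "u1 i1 = 1" using fappf_back_face(1)[OF L1 A(2)] u1_def by blast
  obtain i2 where i2: "u2 i2 = 1" using fappf_back_face(1)[OF L2 B(2)] u2_def by blast
  have "u2 i1 \<le> 1" unfolding u2_def using fappf_back_face(3)[OF L2 B(2)] .
  then have "u2 i1 / S2 \<le> 1 / S2" using S2 by (simp add: divide_right_mono)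
  then have "1 / S1 \<le> 1 / S2" using q[of i1] i1 by simp
  moreover have "u1 i2 \<le> 1" unfolding u1_def using fappf_back_face(3)[OF L1 A(2)] .
  then have "u1 i2 / S1 \<le> 1 / S1" using S1 by (simp add: divide_right_mono)
  then have "1 / S2 \<le> 1 / S1" using q[of i2] i2 by simp
  ultimately have "S1 = S2" using S1 S2 by (simp add: divide_le_eq le_divide_eq)
  then have u: "u1 = u2" using q S1 by (auto simp: fun_eq_iff)
  have LL: "L1 = L2" using carrier_fappf_interior(1)[OF A ia] carrier_fappf_interior(1)[OF B ib] u N unfolding u1_def u2_def by metis
  have tt: "t1 = t2" using carrier_fappf_interior(2)[OF A ia] carrier_fappf_interior(2)[OF B ib] u N unfolding u1_def u2_def by metis
  have "p = q" using L1(1) L2(1) LL by (simp add: back_face_def faces_of_def)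
  then show ?thesis using LL tt e(2) by simp
qed

lemma sd_box_interior_rep:
  assumes X: "delta_set X d" and a: "a \<in> real_total (sd_box X) std_cube"
  shows "\<exists>p xl t'. (p, xl, t') \<in> real_total (sd_box X) std_cube \<and> (\<forall>j<p. 0 < t' j \<and> t' j < 1) \<and>
     ((p, xl, t'), a) \<in> real_rel (sd_box X) std_cube cface (sd_box_act d) (\<lambda>l. fappf l cval)"
proof -
  obtain k xl t where a_eq: "a = (k, xl, t)" and xl: "xl \<in> sd_box X k" and t: "t \<in> std_cube k"
    using a by (auto simp: real_total_def)
  define lam where "lam = carrier_face cval_inv k t"
  define t' where "t' = carrier_coords cval_inv k t"
  have lf: "lam \<in> cface (fdim lam) k" and t'c: "t' \<in> std_cube (fdim lam)"
    using carrier_std_cube[OF t] unfolding lam_def t'_def by auto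
  have van: "\<forall>i\<ge>k + 0. t i = 0" using t by (simp add: std_cube_def)
  have r: "((fdim (carrier_face cval_inv (k + 0) t) - 0, sd_box_act d (carrier_face cval_inv (k + 0) t) xl, carrier_coords cval_inv (k + 0) t), (k, xl, t))
     \<in> real_rel (sd_box X) std_cube (faces_of 0) (sd_box_act d) (\<lambda>l. fappf l cval)"
    by (rule carrier_real_rel[where S = "sd_box X", OF cval_cval_inv _ _ xl van]) (use lf t'c lam_def t'_def in simp_all)
  have v: "sd_box_act d lam xl \<in> sd_box X (fdim lam)" using sd_box_act_closed[OF X lf xl] .
  have int: "0 < t' j \<and> t' j < 1" if "j < fdim lam" for j
  proof -
    have "cval_inv (t' j) = None" unfolding t'_def using carrier_coords_interior that unfolding lam_def by blast
    moreover have "0 \<le> t' j \<and> t' j \<le> 1" using t'c that by (simp add: std_cube_def)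
    ultimately have "t' j \<noteq> 0 \<and> t' j \<noteq> 1" "0 \<le> t' j \<and> t' j \<le> 1" by (auto simp: cval_inv_None)
    then show ?thesis by linarith
  qed
  show ?thesis
    using r v t'c int unfolding a_eq lam_def t'_def
    by (intro exI[of _ "fdim (carrier_face cval_inv k t)"] exI[of _ "sd_box_act d (carrier_face cval_inv k t) xl"] exI[of _ "carrier_coords cval_inv k t"]) (simp add: real_total_def)
qed

lemma carrier_normal_sd_box_map:
  assumes X: "delta_set X d" and a: "(p, (x, L), t) \<in> real_total (sd_box X) std_cube"
    and int: "\<And>j. j < p \<Longrightarrow> 0 < t j \<and> t j < 1"
  shows "carrier_normal 1 sval_inv d (sd_box_map (p, (x, L), t)) = sd_box_map (p, (x, L), t)"
proof -
  have xl: "(x, L) \<in> sd_box X p" and t: "t \<in> std_cube p" using a by (auto simp: real_total_def)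
  have L: "L \<in> back_face p (length L)" "p < length L" "x \<in> X (length L - 1)" using xl by (auto simp: sd_box_def)
  have fL: "fdim L = p" using L(1) by (simp add: back_face_def faces_of_def)
  define u where "u = fappf L cval t"
  have S: "1 \<le> (\<Sum>j<length L. u j)" unfolding u_def using fappf_back_face(4)[OF L(1,2) t] .
  have pos: "0 < u i" if "i < length L" for i
    unfolding u_def
  proof (rule fappf_values[where P = "\<lambda>r. 0 < r"])
    fix c assume "Some c \<in> set L"
    then have "c = True" using back_face_no_False[OF L(1)] by (cases c) auto
    then show "0 < cval c" by (simp add: cval_def)
  qed (use int fL that in auto)
  have N1: "length L - 1 + 1 = length L" using L(2) by simp
  have "carrier_normal 1 sval_inv d (length L - 1, x, normalise (length L) u) = (length L - 1, x, normalise (length L) u)"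
  proof (rule carrier_normal_interior)
    show "presheaf 1 X d" using X by (simp add: delta_set_def)
    show "x \<in> X (length L - 1)" using L(3) .
    fix i assume "i < length L - 1 + 1"
    then have "0 < normalise (length L) u i" using pos S N1 unfolding normalise_def by simp
    then show "sval_inv (normalise (length L) u i) = None" by (simp add: sval_inv_def)
  next
    show "\<forall>i\<ge>length L - 1 + 1. normalise (length L) u i = 0"
      unfolding N1 normalise_def u_def by (simp add: fappf_beyond)
  qed
  then show ?thesis unfolding sd_box_map_def u_def by simp
qed

lemma sd_box_map_reflects:
  assumes X: "delta_set X d"
    and a: "a \<in> real_total (sd_box X) std_cube" and b: "b \<in> real_total (sd_box X) std_cube"
    and r: "(sd_box_map a, sd_box_map b) \<in> real_rel X std_simplex sface d (\<lambda>l. fappf l sval)"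
  shows "(a, b) \<in> real_rel (sd_box X) std_cube cface (sd_box_act d) (\<lambda>l. fappf l cval)"
proof (rule reflect_by_normal_forms[OF equiv_real_rel equiv_real_rel _ _ _ _ _ a b r,
      where P = "\<lambda>(p, xl, t). (p, xl, t) \<in> real_total (sd_box X) std_cube \<and> (\<forall>j<p. 0 < t j \<and> t j < 1)"
      and \<kappa> = "carrier_normal 1 sval_inv d"])
  show "(sd_box_map a, sd_box_map b) \<in> real_rel X std_simplex sface d (\<lambda>l. fappf l sval)"
    if "(a, b) \<in> real_rel (sd_box X) std_cube cface (sd_box_act d) (\<lambda>l. fappf l cval)" for a b
    using real_rel_map[OF that sd_box_map_real_rel[OF X] equiv_real_rel] .
  show "\<exists>a'. (case a' of (p, xl, t) \<Rightarrow> (p, xl, t) \<in> real_total (sd_box X) std_cube \<and> (\<forall>j<p. 0 < t j \<and> t j < 1)) \<and>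
      (a', a) \<in> real_rel (sd_box X) std_cube cface (sd_box_act d) (\<lambda>l. fappf l cval)"
    if "a \<in> real_total (sd_box X) std_cube" for a
    using sd_box_interior_rep[OF X that] by fastforce
  show "carrier_normal 1 sval_inv d u = carrier_normal 1 sval_inv d v"
    if "(u, v) \<in> real_rel X std_simplex sface d (\<lambda>l. fappf l sval)" for u v
    using X that carrier_std_simplex(1) sval_inv_sval
    by (intro carrier_normal_real_rel[where v = sval]) (auto simp: delta_set_def)
  show "carrier_normal 1 sval_inv d (sd_box_map a) = sd_box_map a"
    if "case a of (p, xl, t) \<Rightarrow> (p, xl, t) \<in> real_total (sd_box X) std_cube \<and> (\<forall>j<p. 0 < t j \<and> t j < 1)" for a
    using that carrier_normal_sd_box_map[OF X] by (auto split: prod.splits)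
  show "a = b"
    if "case a of (p, xl, t) \<Rightarrow> (p, xl, t) \<in> real_total (sd_box X) std_cube \<and> (\<forall>j<p. 0 < t j \<and> t j < 1)"
      and "case b of (p, xl, t) \<Rightarrow> (p, xl, t) \<in> real_total (sd_box X) std_cube \<and> (\<forall>j<p. 0 < t j \<and> t j < 1)"
      and "sd_box_map a = sd_box_map b" for a b
  proof -
    obtain p xl1 t1 q xl2 t2 where "a = (p, xl1, t1)" "b = (q, xl2, t2)" by (metis prod_cases3)
    moreover obtain x1 L1 x2 L2 where "xl1 = (x1, L1)" "xl2 = (x2, L2)" by fastforce
    ultimately show ?thesis using that by (simp only:) (intro sd_box_map_inj_interior[where X = X]; simp)
  qed
qed

lemma finite_sd_box_fibre:
  "finite {(n, xl). xl \<in> sd_box X n \<and> (length (snd xl) - 1, fst xl) = (m, y)}"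
proof (rule finite_subset)
  show "{(n, xl). xl \<in> sd_box X n \<and> (length (snd xl) - 1, fst xl) = (m, y)}
      \<subseteq> (\<lambda>(n, L). (n, (y, L))) ` ({..m} \<times> {L. set L \<subseteq> UNIV \<and> length L = Suc m})"
    by (force simp: sd_box_def)
  show "finite ((\<lambda>(n, L). (n, (y, L))) ` ({..m} \<times> {L :: bool option list. set L \<subseteq> UNIV \<and> length L = Suc m}))"
    by (intro finite_imageI finite_cartesian_product finite_lists_length_eq) auto
qed

definition cval_inv_back :: "real \<Rightarrow> bool option" where
  "cval_inv_back r = (if r = 1 then Some True else None)"

text \<open>A point of the simplex is hit from the cube of the back face spanned by its maximal
coordinates: scale it so that the maximum is 1.\<close>

lemma sd_box_cell_cover:
  assumes s: "s \<in> std_simplex m"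
  shows "\<exists>L t. L \<in> back_face (fdim L) (Suc m) \<and> fdim L < Suc m \<and> t \<in> std_cube (fdim L) \<and>
    normalise (Suc m) (fappf L cval t) = s"
proof -
  define M where "M = Max (s ` {..m})"
  have "M \<in> s ` {..m}" unfolding M_def by (intro Max_in) auto
  then obtain i0 where i0: "i0 \<le> m" "s i0 = M" by auto
  have le: "s i \<le> M" if "i \<le> m" for i unfolding M_def using that by (intro Max_ge) auto
  have s1: "(\<Sum>i\<le>m. s i) = 1" and s0: "\<And>i. i \<le> m \<Longrightarrow> 0 \<le> s i" and sb: "\<And>i. i > m \<Longrightarrow> s i = 0"
    using s by (auto simp: std_simplex_def)
  have "1 \<le> (\<Sum>i\<le>m. M)" unfolding s1[symmetric] using le by (intro sum_mono) auto
  then have "0 < real (Suc m) * M" by simp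
  then have Mpos: "0 < M" using zero_less_mult_pos[of "real (Suc m)" M] by simp
  define w where "w i = s i / M" for i
  define L where "L = carrier_face cval_inv_back (Suc m) w"
  define t where "t = carrier_coords cval_inv_back (Suc m) w"
  have w01: "0 \<le> w i \<and> w i \<le> 1" if "i < Suc m" for i
    unfolding w_def using s0[of i] le[of i] that Mpos by (simp add: divide_le_eq_1)
  have wb: "\<forall>i\<ge>Suc m. w i = 0" unfolding w_def using sb by auto
  have lenL: "length L = Suc m" unfolding L_def by simp
  have "L ! i0 = Some True"
    unfolding L_def using carrier_face_nth[of i0 "Suc m" cval_inv_back w] i0 Mpos
    by (simp add: cval_inv_back_def w_def)
  then have "Some True \<in> set L" using i0 lenL by (metis le_imp_less_Suc nth_mem)
  then have plt: "fdim L < Suc m" using fdim_less_length[of L] lenL by auto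
  have "Some False \<notin> set L"
  proof
    assume "Some False \<in> set L"
    then obtain r where "Some False = cval_inv_back r" unfolding L_def using carrier_face_set by blast
    then show False by (simp add: cval_inv_back_def split: if_splits)
  qed
  then have Lb: "L \<in> back_face (fdim L) (Suc m)"
    using lenL unfolding back_face_def faces_of_def by auto
  have "0 \<le> t j \<and> t j \<le> 1" if "j < fdim L" for j
    unfolding t_def using that w01 unfolding L_def
    by (intro carrier_coords_values[where P = "\<lambda>r. 0 \<le> r \<and> r \<le> 1"]) auto
  moreover have "t j = 0" if "j \<ge> fdim L" for j
    unfolding t_def using that unfolding L_def by (intro carrier_coords_beyond)
  ultimately have tc: "t \<in> std_cube (fdim L)" unfolding std_cube_def by auto
  have fw: "fappf L cval t = w" unfolding L_def t_def
    by (rule fappf_carrier_face[OF _ wb]) (auto simp: cval_inv_back_def cval_def split: if_splits)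
  have "(\<Sum>j<Suc m. w j) = 1 / M" unfolding w_def
    using s1 by (simp add: sum_divide_distrib[symmetric] lessThan_Suc_atMost)
  then have "normalise (Suc m) (fappf L cval t) = s"
    unfolding fw normalise_def unfolding w_def using Mpos by (simp add: fun_eq_iff)
  then show ?thesis using Lb plt tc by blast
qed

lemma sd_box_fibre_cover:
  assumes y: "y \<in> X m" and u: "u \<in> std_simplex m"
  shows "\<exists>n xl s. xl \<in> sd_box X n \<and> (length (snd xl) - 1, fst xl) = (m, y) \<and> s \<in> std_cube n \<and>
      normalise (length (snd xl)) (fappf (snd xl) cval s) = u"
proof -
  obtain L t where L: "L \<in> back_face (fdim L) (Suc m)" "fdim L < Suc m" "t \<in> std_cube (fdim L)"
    and Lu: "normalise (Suc m) (fappf L cval t) = u"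
    using sd_box_cell_cover[OF u] by blast
  have "length L = Suc m" using L(1) by (simp add: back_face_def faces_of_def)
  then have "(y, L) \<in> sd_box X (fdim L)" using L y by (simp add: sd_box_def)
  then show ?thesis using \<open>length L = Suc m\<close> L(3) Lu
    by (intro exI[of _ "fdim L"] exI[of _ "(y, L)"] exI[of _ t]) simp
qed

lemma cell_map_sd_box:
  assumes X: "delta_set X d"
  shows "cell_map (sd_box X) std_cube cface (sd_box_act d) (\<lambda>l. fappf l cval) X std_simplex sface d (\<lambda>l. fappf l sval)
    (\<lambda>n xl. (length (snd xl) - 1, fst xl)) (\<lambda>n xl t. normalise (length (snd xl)) (fappf (snd xl) cval t))
    sd_box_map"
proof (unfold_locales)
  show "sd_box_map (n, xl, t) = (fst (length (snd xl) - 1, fst xl), snd (length (snd xl) - 1, fst xl),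
        normalise (length (snd xl)) (fappf (snd xl) cval t))" for n xl t
    by (cases xl) (simp add: sd_box_map_def)
  show "sd_box_act d l xl \<in> sd_box X p \<and> fappf l cval t \<in> std_cube n"
    if "l \<in> cface p n" "xl \<in> sd_box X n" "t \<in> std_cube p" for p n l xl t
    using sd_box_act_closed[OF X that(1,2)] fappf_std_cube[OF that(1,3)] by simp
  show "d l x \<in> X p \<and> fappf l sval t \<in> std_simplex n"
    if "l \<in> sface p n" "x \<in> X n" "t \<in> std_simplex p" for p n l x t
    using X that fappf_std_simplex[OF that(1,3)] unfolding delta_set_def presheaf_def by blast
  show "snd (length (snd xl) - 1, fst xl) \<in> X (fst (length (snd xl) - 1, fst xl))"
    if "xl \<in> sd_box X n" for n xl
    using that by (auto simp: sd_box_def)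
  show "normalise (length (snd xl)) (fappf (snd xl) cval t) \<in> std_simplex (fst (length (snd xl) - 1, fst xl))"
    if "xl \<in> sd_box X n" "t \<in> std_cube n" for n xl t
    using sd_box_cell_in_simplex[of "fst xl" "snd xl" X n t] that by simp
  show "continuous_on (std_cube n) (\<lambda>t. normalise (length (snd xl)) (fappf (snd xl) cval t))"
    if "xl \<in> sd_box X n" for n xl
    using continuous_on_sd_box_cell[of "fst xl" "snd xl" X n] that by simp
  show "(sd_box_map (p, sd_box_act d l xl, t), sd_box_map (n, xl, fappf l cval t))
      \<in> real_rel X std_simplex sface d (\<lambda>l. fappf l sval)"
    if "l \<in> cface p n" "xl \<in> sd_box X n" "t \<in> std_cube p" for p n l xl t
    using sd_box_map_real_rel[OF X that] .
  show "(a, b) \<in> real_rel (sd_box X) std_cube cface (sd_box_act d) (\<lambda>l. fappf l cval)"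
    if "a \<in> real_total (sd_box X) std_cube" "b \<in> real_total (sd_box X) std_cube"
      "(sd_box_map a, sd_box_map b) \<in> real_rel X std_simplex sface d (\<lambda>l. fappf l sval)" for a b
    using sd_box_map_reflects[OF X that] .
  show "finite {(n, xl). xl \<in> sd_box X n \<and> (length (snd xl) - 1, fst xl) = (m, y)}" for m y
    by (rule finite_sd_box_fibre)
  show "\<exists>n xl s. xl \<in> sd_box X n \<and> (length (snd xl) - 1, fst xl) = (m, y) \<and> s \<in> std_cube n \<and>
      normalise (length (snd xl)) (fappf (snd xl) cval s) = u"
    if "y \<in> X m" and "u \<in> std_simplex m" for m y u
    using sd_box_fibre_cover that .
  show "compact (std_cube n)" for n by (rule compact_std_cube)
qed

theorem delta_real_homeomorphic_sd_box:
  assumes X: "delta_set X d"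
  shows "delta_real X d homeomorphic_space cube_real (sd_box X) (sd_box_act d)"
  using cell_map.realisation_homeomorphic_space[OF cell_map_sd_box[OF X]] homeomorphic_space_sym
  unfolding cube_real_def delta_real_def by blast

section \<open>The simplicial subdivision of a \<open>\<box>\<close>-set\<close>

definition chain :: "nat \<Rightarrow> bool option list list \<Rightarrow> bool" where
  "chain n ls \<longleftrightarrow> (\<forall>i<length ls. fdim (ls ! i) < length (ls ! i)) \<and>
      (\<forall>i. Suc i < length ls \<longrightarrow> length (ls ! i) = fdim (ls ! Suc i)) \<and>
      (0 < length ls \<longrightarrow> length (ls ! (length ls - 1)) = n)"

lemma sd_delta_chain: "(n, x, ls) \<in> sd_delta C k \<longleftrightarrow> x \<in> C n \<and> length ls = k \<and> chain n ls"
  unfolding sd_delta_def chain_def by auto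

text \<open>For a chain \<open>ls = [\<lambda>\<^sub>1, \<dots>, \<lambda>\<^sub>k]\<close> ending in \<open>I\<^sup>n\<close>, \<open>chain_dim n ls j\<close> is \<open>n\<^sub>j\<close> and
\<open>to_top n ls j\<close> is the composite \<open>\<lambda>\<^sub>k \<circ> \<dots> \<circ> \<lambda>\<^sub>j\<^sub>+\<^sub>1\<close> from the \<open>n\<^sub>j\<close>-cube to \<open>I\<^sup>n\<close>.\<close>

definition chain_dim :: "nat \<Rightarrow> bool option list list \<Rightarrow> nat \<Rightarrow> nat" where
  "chain_dim n ls j = (if j < length ls then fdim (ls ! j) else n)"

primrec to_top_rec :: "nat \<Rightarrow> bool option list list \<Rightarrow> nat \<Rightarrow> bool option list" where
  "to_top_rec n ls 0 = replicate n None"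
| "to_top_rec n ls (Suc r) = fcomp (to_top_rec n ls r) (ls ! (length ls - Suc r))"

definition to_top :: "nat \<Rightarrow> bool option list list \<Rightarrow> nat \<Rightarrow> bool option list" where
  "to_top n ls j = to_top_rec n ls (length ls - j)"

lemma to_top_beyond: "j \<ge> length ls \<Longrightarrow> to_top n ls j = replicate n None"
  by (simp add: to_top_def)

lemma to_top_step: "j < length ls \<Longrightarrow> to_top n ls j = fcomp (to_top n ls (Suc j)) (ls ! j)"
proof -
  assume j: "j < length ls"
  then have "length ls - j = Suc (length ls - Suc j)" by arith
  moreover have "length ls - Suc (length ls - Suc j) = j" using j by arith
  ultimately show ?thesis unfolding to_top_def by simp
qed

lemma length_chain_nth: "chain n ls \<Longrightarrow> j < length ls \<Longrightarrow> length (ls ! j) = chain_dim n ls (Suc j)"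
proof -
  assume c: "chain n ls" and j: "j < length ls"
  show ?thesis
  proof (cases "Suc j < length ls")
    case True then show ?thesis using c unfolding chain_def chain_dim_def by simp
  next
    case False
    then have "j = length ls - 1" using j by arith
    moreover have "ls \<noteq> []" using j by auto
    ultimately show ?thesis using c j False unfolding chain_def chain_dim_def by simp
  qed
qed

lemma chain_dim_less: "chain n ls \<Longrightarrow> j < length ls \<Longrightarrow> chain_dim n ls j < chain_dim n ls (Suc j)"
  using length_chain_nth[of n ls j] unfolding chain_def chain_dim_def by auto

lemma to_top_dims:
  assumes c: "chain n ls" and j: "j \<le> length ls"
  shows "length (to_top n ls j) = n \<and> fdim (to_top n ls j) = chain_dim n ls j"
  using j
proof (induction rule: inc_induct)
  case base then show ?case by (simp add: to_top_beyond chain_dim_def)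
next
  case (step j)
  then show ?case using to_top_step[OF step.hyps(2)] length_chain_nth[OF c step.hyps(2)]
    by (simp add: fdim_fcomp chain_dim_def)
qed

lemma chain_dim_mono: "chain n ls \<Longrightarrow> j < j' \<Longrightarrow> j' \<le> length ls \<Longrightarrow> chain_dim n ls j < chain_dim n ls j'"
proof (induction j' rule: less_induct)
  case (less j')
  then obtain j0 where j0: "j' = Suc j0" by (cases j') auto
  have "chain_dim n ls j0 < chain_dim n ls j'" using chain_dim_less[OF less.prems(1)] less.prems j0 by simp
  show ?case
  proof (cases "j = j0")
    case True then show ?thesis using \<open>chain_dim n ls j0 < chain_dim n ls j'\<close> by simp
  next
    case False
    then have "chain_dim n ls j < chain_dim n ls j0" using less.IH[of j0] less.prems j0 by simp
    then show ?thesis using \<open>chain_dim n ls j0 < chain_dim n ls j'\<close> by simp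
  qed
qed

lemma cmpn_dims: "chain n ls \<Longrightarrow> j + m < length ls \<Longrightarrow>
    length (cmpn ls j m) = chain_dim n ls (Suc (j + m)) \<and> fdim (cmpn ls j m) = chain_dim n ls j"
proof (induction m)
  case 0 then show ?case using length_chain_nth[of n ls j] by (simp add: chain_dim_def)
next
  case (Suc m)
  have "length (ls ! (j + Suc m)) = chain_dim n ls (Suc (j + Suc m))" using length_chain_nth Suc.prems by simp
  moreover have "fdim (ls ! (j + Suc m)) = chain_dim n ls (j + Suc m)" using Suc.prems by (simp add: chain_dim_def)
  ultimately show ?case using Suc by (simp add: fdim_fcomp)
qed

lemma to_top_cmpn: "chain n ls \<Longrightarrow> j + m < length ls \<Longrightarrow> fcomp (to_top n ls (Suc (j + m))) (cmpn ls j m) = to_top n ls j"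
proof (induction m)
  case 0 then show ?case using to_top_step[of j ls n] by simp
next
  case (Suc m)
  have l1: "length (ls ! (j + Suc m)) = fdim (to_top n ls (Suc (j + Suc m)))"
    using length_chain_nth[OF Suc.prems(1), of "j + Suc m"] to_top_dims[OF Suc.prems(1), of "Suc (j + Suc m)"] Suc.prems(2) by simp
  have "fcomp (to_top n ls (Suc (j + Suc m))) (cmpn ls j (Suc m))
      = fcomp (fcomp (to_top n ls (Suc (j + Suc m))) (ls ! (j + Suc m))) (cmpn ls j m)"
    using fcomp_assoc[OF l1] by simp
  also have "fcomp (to_top n ls (Suc (j + Suc m))) (ls ! (j + Suc m)) = to_top n ls (Suc (j + m))"
    using to_top_step[of "j + Suc m" ls n] Suc.prems by simp
  finally show ?case using Suc by simp
qed

lemma cmpn_to_top: "chain n ls \<Longrightarrow> j < length ls \<Longrightarrow> cmpn ls j (length ls - j - 1) = to_top n ls j"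
proof -
  assume c: "chain n ls" and j: "j < length ls"
  have e: "Suc (j + (length ls - j - 1)) = length ls" "j + (length ls - j - 1) < length ls" using j by arith+
  have "length (cmpn ls j (length ls - j - 1)) = n"
    using cmpn_dims[OF c e(2)] unfolding e(1) by (simp add: chain_dim_def)
  moreover have "fcomp (to_top n ls (length ls)) (cmpn ls j (length ls - j - 1)) = to_top n ls j"
    using to_top_cmpn[OF c e(2)] unfolding e(1) .
  moreover have "to_top n ls (length ls) = replicate n None" by (rule to_top_beyond) simp
  ultimately show ?thesis using fcomp_id_left[of "cmpn ls j (length ls - j - 1)" n] by metis
qed

lemma hits_Nil[simp]: "hits [] = []" by (simp add: hits_def)

lemma hits_Cons: "hits (a # l) = (if a = None then 0 # map Suc (hits l) else map Suc (hits l))"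
proof -
  have "[0..<Suc N] = 0 # map Suc [0..<N]" for N by (subst upt_rec) (simp add: map_Suc_upt)
  then have "[0..<Suc (length l)] = 0 # map Suc [0..<length l]" .
  then show ?thesis unfolding hits_def by (simp add: filter_map o_def)
qed

lemma length_hits: "length (hits l) = fdim l"
  by (induction l) (auto simp: hits_Cons fdim_Cons)

lemma set_hits: "set (hits l) = {j. j < length l \<and> l ! j = None}"
  unfolding hits_def by auto

lemma sorted_hits: "sorted_wrt (<) (hits l)"
  unfolding hits_def by (intro sorted_wrt_filter) simp

lemma fappf_weighted:
  "(\<Sum>j<length l. fappf l (\<lambda>_. 0) s j * g j) = (\<Sum>a<fdim l. s a * g (hits l ! a))"
proof (induction l arbitrary: s g)
  case Nil then show ?case by simp
next
  case (Cons e l)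
  show ?case
  proof (cases e)
    case None
    have "(\<Sum>j<length (e # l). fappf (e # l) (\<lambda>_. 0) s j * g j)
        = s 0 * g 0 + (\<Sum>j<length l. fappf l (\<lambda>_. 0) (\<lambda>j. s (Suc j)) j * g (Suc j))"
      using None by (simp del: sum.lessThan_Suc add: sum.lessThan_Suc_shift)
    also have "\<dots> = s 0 * g 0 + (\<Sum>a<fdim l. s (Suc a) * g (Suc (hits l ! a)))"
      using Cons.IH[of "\<lambda>j. s (Suc j)" "\<lambda>j. g (Suc j)"] by simp
    also have "\<dots> = (\<Sum>a<fdim (e # l). s a * g (hits (e # l) ! a))"
      using None length_hits[of l] by (simp del: sum.lessThan_Suc add: sum.lessThan_Suc_shift hits_Cons)
    finally show ?thesis .
  next
    case (Some c)
    have "(\<Sum>j<length (e # l). fappf (e # l) (\<lambda>_. 0) s j * g j)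
        = (\<Sum>j<length l. fappf l (\<lambda>_. 0) s j * g (Suc j))"
      using Some by (simp del: sum.lessThan_Suc add: sum.lessThan_Suc_shift)
    also have "\<dots> = (\<Sum>a<fdim l. s a * g (Suc (hits l ! a)))"
      using Cons.IH[of s "\<lambda>j. g (Suc j)"] by simp
    also have "\<dots> = (\<Sum>a<fdim (e # l). s a * g (hits (e # l) ! a))"
      using Some length_hits[of l] by (simp add: hits_Cons)
    finally show ?thesis .
  qed
qed

definition centre :: "bool option list \<Rightarrow> nat \<Rightarrow> real" where
  "centre m = fappf m cval (\<lambda>_. 1/2)"

definition chain_map :: "nat \<Rightarrow> bool option list list \<Rightarrow> (nat \<Rightarrow> real) \<Rightarrow> nat \<Rightarrow> real" where
  "chain_map n ls s = (\<lambda>i. \<Sum>j\<le>length ls. s j * centre (to_top n ls j) i)"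

lemma centre_range: "0 \<le> centre m i \<and> centre m i \<le> 1"
proof (cases "i < length m")
  case True
  show ?thesis unfolding centre_def
    by (rule fappf_values[OF _ _ True, where P = "\<lambda>r. 0 \<le> r \<and> r \<le> 1"]) (auto simp: cval_def)
qed (simp add: centre_def fappf_beyond)

lemma chain_map_in_std_cube:
  assumes c: "chain n ls" and s: "s \<in> std_simplex (length ls)"
  shows "chain_map n ls s \<in> std_cube n"
proof -
  have s0: "\<And>j. j \<le> length ls \<Longrightarrow> 0 \<le> s j" and s1: "(\<Sum>j\<le>length ls. s j) = 1"
    using s by (auto simp: std_simplex_def)
  have "0 \<le> chain_map n ls s i \<and> chain_map n ls s i \<le> 1" for i
  proof
    show "0 \<le> chain_map n ls s i" unfolding chain_map_def using s0 centre_range by (intro sum_nonneg) simp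
    have "chain_map n ls s i \<le> (\<Sum>j\<le>length ls. s j * 1)" unfolding chain_map_def
      using s0 centre_range by (intro sum_mono mult_left_mono) auto
    then show "chain_map n ls s i \<le> 1" using s1 by simp
  qed
  moreover have "chain_map n ls s i = 0" if "i \<ge> n" for i
  proof -
    have "centre (to_top n ls j) i = 0" if "j \<le> length ls" for j
      using to_top_dims[OF c that] \<open>i \<ge> n\<close> unfolding centre_def by (simp add: fappf_beyond)
    then show ?thesis unfolding chain_map_def by simp
  qed
  ultimately show ?thesis unfolding std_cube_def by auto
qed

lemma continuous_on_chain_map: "continuous_on UNIV (chain_map n ls)"
  unfolding chain_map_def
  by (intro continuous_on_coordinatewise_then_product continuous_on_sum continuous_on_mult
      continuous_on_const continuous_on_product_coordinates)

lemma cmpn_segment: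
  assumes c: "chain n ls" and jj: "j < j'" "j' \<le> length ls"
  shows "length (cmpn ls j (j' - j - 1)) = chain_dim n ls j'" "fdim (cmpn ls j (j' - j - 1)) = chain_dim n ls j"
    "fcomp (to_top n ls j') (cmpn ls j (j' - j - 1)) = to_top n ls j"
proof -
  have e: "j + (j' - j - 1) < length ls" "Suc (j + (j' - j - 1)) = j'" using jj by arith+
  show "length (cmpn ls j (j' - j - 1)) = chain_dim n ls j'" "fdim (cmpn ls j (j' - j - 1)) = chain_dim n ls j"
    using cmpn_dims[OF c e(1)] unfolding e(2) by auto
  show "fcomp (to_top n ls j') (cmpn ls j (j' - j - 1)) = to_top n ls j"
    using to_top_cmpn[OF c e(1)] unfolding e(2) .
qed

lemma hits_sface:
  assumes l: "l \<in> sface p k"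
  shows "length (hits l) = Suc p" "\<forall>a<Suc p. hits l ! a \<le> k"
proof -
  show len: "length (hits l) = Suc p" using l by (simp add: length_hits faces_of_def)
  show "\<forall>a<Suc p. hits l ! a \<le> k"
  proof (intro allI impI)
    fix a assume "a < Suc p"
    then have "hits l ! a \<in> set (hits l)" using len by simp
    then show "hits l ! a \<le> k" using l unfolding set_hits faces_of_def by auto
  qed
qed

definition subchain :: "bool option list list \<Rightarrow> nat list \<Rightarrow> bool option list list" where
  "subchain ls js = map (\<lambda>a. cmpn ls (js ! a) (js ! Suc a - js ! a - 1)) [0..<length js - 1]"

context
  fixes n ls js p
  assumes c: "chain n ls" and len: "length js = Suc p" and sorted: "sorted_wrt (<) js"
    and bound: "\<forall>a<Suc p. js ! a \<le> length ls"
begin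

lemma length_subchain: "length (subchain ls js) = p"
  using len by (simp add: subchain_def)

lemma subchain_segment:
  assumes a: "a < p"
  shows "length (subchain ls js ! a) = chain_dim n ls (js ! Suc a)"
    "fdim (subchain ls js ! a) = chain_dim n ls (js ! a)"
    "fcomp (to_top n ls (js ! Suc a)) (subchain ls js ! a) = to_top n ls (js ! a)"
    "chain_dim n ls (js ! a) < chain_dim n ls (js ! Suc a)"
proof -
  have lt: "js ! a < js ! Suc a" using sorted_wrt_nth_less[OF sorted, of a "Suc a"] a len by simp
  have "subchain ls js ! a = cmpn ls (js ! a) (js ! Suc a - js ! a - 1)"
    using a len by (simp add: subchain_def)
  then show "length (subchain ls js ! a) = chain_dim n ls (js ! Suc a)"
    "fdim (subchain ls js ! a) = chain_dim n ls (js ! a)"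
    "fcomp (to_top n ls (js ! Suc a)) (subchain ls js ! a) = to_top n ls (js ! a)"
    using cmpn_segment[OF c lt] bound a by auto
  show "chain_dim n ls (js ! a) < chain_dim n ls (js ! Suc a)"
    using chain_dim_mono[OF c lt] bound a by simp
qed

lemma chain_subchain: "chain (chain_dim n ls (js ! p)) (subchain ls js)"
  unfolding chain_def length_subchain
proof (intro conjI allI impI)
  fix a assume "a < p"
  then show "fdim (subchain ls js ! a) < length (subchain ls js ! a)" using subchain_segment by simp
next
  fix a assume "Suc a < p"
  then show "length (subchain ls js ! a) = fdim (subchain ls js ! Suc a)" using subchain_segment by simp
next
  assume "0 < p"
  then show "length (subchain ls js ! (p - 1)) = chain_dim n ls (js ! p)" using subchain_segment by simp
qed

lemma to_top_subchain:
  assumes "a \<le> p"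
  shows "fcomp (to_top n ls (js ! p)) (to_top (chain_dim n ls (js ! p)) (subchain ls js) a) = to_top n ls (js ! a)"
  using assms
proof (induction rule: inc_induct)
  have dims: "length (to_top n ls (js ! p)) = n" "fdim (to_top n ls (js ! p)) = chain_dim n ls (js ! p)"
    using to_top_dims[OF c] bound by auto
  case base
  show ?case
    using to_top_beyond[of "subchain ls js" p] length_subchain fcomp_id_right[of "to_top n ls (js ! p)"] dims
    by simp
next
  case (step a)
  have "length (to_top (chain_dim n ls (js ! p)) (subchain ls js) (Suc a)) = fdim (to_top n ls (js ! p))"
    using to_top_dims[OF chain_subchain, of "Suc a"] to_top_dims[OF c, of "js ! p"] step.hyps
      length_subchain bound by simp
  moreover have "to_top (chain_dim n ls (js ! p)) (subchain ls js) a =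
      fcomp (to_top (chain_dim n ls (js ! p)) (subchain ls js) (Suc a)) (subchain ls js ! a)"
    using to_top_step[of a "subchain ls js"] step.hyps length_subchain by simp
  ultimately show ?case
    using step.IH subchain_segment(3)[OF step.hyps(2)] by (simp add: fcomp_assoc[symmetric])
qed

end

lemma sd_delta_act_eq:
  assumes C: "cube_set C c" and l: "l \<in> sface p k" and z: "(n, x, ls) \<in> sd_delta C k"
  shows "sd_delta_act c l (n, x, ls) =
      (chain_dim n ls (hits l ! p), c (to_top n ls (hits l ! p)) x, subchain ls (hits l))"
    "to_top n ls (hits l ! p) \<in> cface (chain_dim n ls (hits l ! p)) n"
proof -
  have xC: "x \<in> C n" and k: "length ls = k" and c: "chain n ls" using z by (auto simp: sd_delta_chain)
  have len: "length (hits l) = Suc p" and jpk: "hits l ! p \<le> length ls"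
    using hits_sface[OF l] k by auto
  have last: "last (hits l) = hits l ! p" using last_conv_nth[of "hits l"] len by force
  show "sd_delta_act c l (n, x, ls) =
      (chain_dim n ls (hits l ! p), c (to_top n ls (hits l ! p)) x, subchain ls (hits l))"
  proof (cases "hits l ! p = length ls")
    case True
    have "c (replicate n None) x = x" using C xC unfolding cube_set_def presheaf_def by auto
    then show ?thesis unfolding sd_delta_act_def Let_def last subchain_def
      using True len by (simp add: chain_dim_def to_top_beyond)
  next
    case False
    then have lt: "hits l ! p < length ls" using jpk by simp
    then show ?thesis unfolding sd_delta_act_def Let_def last subchain_def
      using False len cmpn_to_top[OF c lt] by (simp add: chain_dim_def)
  qed
  show "to_top n ls (hits l ! p) \<in> cface (chain_dim n ls (hits l ! p)) n"
    using to_top_dims[OF c jpk] by (simp add: faces_of_def)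
qed

lemma sd_delta_act_closed:
  assumes C: "cube_set C c" and l: "l \<in> sface p k" and z: "z \<in> sd_delta C k"
  shows "sd_delta_act c l z \<in> sd_delta C p"
proof -
  obtain n x ls where z_eq: "z = (n, x, ls)" by (cases z) auto
  have xC: "x \<in> C n" and k: "length ls = k" and c: "chain n ls" using z z_eq by (auto simp: sd_delta_chain)
  note A = sd_delta_act_eq[OF C l z[unfolded z_eq]]
  note hs = hits_sface[OF l, folded k]
  have "c (to_top n ls (hits l ! p)) x \<in> C (chain_dim n ls (hits l ! p))"
    using C A(2) xC unfolding cube_set_def presheaf_def by auto
  then show ?thesis unfolding z_eq A(1) sd_delta_chain
    using chain_subchain[OF c hs(1) sorted_hits hs(2)] length_subchain[OF c hs(1) sorted_hits hs(2)]
    by simp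
qed

text \<open>Naturality of the chain maps: restricting a chain along a face of its simplex and then
mapping into the cube is the same as mapping the face into the big simplex.\<close>

lemma fappf_chain_map_subchain:
  assumes c: "chain n ls" and l: "l \<in> sface p (length ls)" and s: "s \<in> std_simplex p"
  shows "fappf (to_top n ls (hits l ! p)) cval (chain_map (chain_dim n ls (hits l ! p)) (subchain ls (hits l)) s)
    = chain_map n ls (fappf l sval s)"
proof -
  let ?jp = "hits l ! p" and ?ls' = "subchain ls (hits l)"
  let ?n' = "chain_dim n ls ?jp"
  note hs = hits_sface[OF l]
  note sub = chain_subchain[OF c hs(1) sorted_hits hs(2)] length_subchain[OF c hs(1) sorted_hits hs(2)]
    to_top_subchain[OF c hs(1) sorted_hits hs(2)]
  have dims: "length (to_top ?n' ?ls' a) = fdim (to_top n ls ?jp)" if "a \<le> p" for a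
    using to_top_dims[OF sub(1), of a] to_top_dims[OF c, of ?jp] sub(2) that hs(2) by simp
  have "(\<Sum>a\<le>p. s a) = 1" using s by (simp add: std_simplex_def)
  then have "fappf (to_top n ls ?jp) cval (chain_map ?n' ?ls' s) =
      (\<lambda>i. \<Sum>a\<le>p. s a * fappf (to_top n ls ?jp) cval (centre (to_top ?n' ?ls' a)) i)"
    unfolding chain_map_def sub(2) by (intro fappf_affine) auto
  also have "\<dots> = (\<lambda>i. \<Sum>a\<le>p. s a * centre (to_top n ls (hits l ! a)) i)"
  proof (rule ext, rule sum.cong[OF refl])
    fix i a assume a: "a \<in> {..p}"
    have "fappf (to_top n ls ?jp) cval (centre (to_top ?n' ?ls' a)) =
        centre (fcomp (to_top n ls ?jp) (to_top ?n' ?ls' a))"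
      unfolding centre_def using fappf_fcomp[OF dims] a by simp
    then show "s a * fappf (to_top n ls ?jp) cval (centre (to_top ?n' ?ls' a)) i =
        s a * centre (to_top n ls (hits l ! a)) i"
      using sub(3)[of a] a by simp
  qed
  also have "\<dots> = chain_map n ls (fappf l sval s)"
  proof (rule ext)
    fix i
    have ll: "length l = Suc (length ls)" "fdim l = Suc p" using l by (auto simp: faces_of_def)
    have "chain_map n ls (fappf l sval s) i = (\<Sum>j<length l. fappf l (\<lambda>_. 0) s j * centre (to_top n ls j) i)"
      unfolding chain_map_def sval_0 ll by (simp add: lessThan_Suc_atMost)
    also have "\<dots> = (\<Sum>a<fdim l. s a * centre (to_top n ls (hits l ! a)) i)" by (rule fappf_weighted)
    finally show "(\<Sum>a\<le>p. s a * centre (to_top n ls (hits l ! a)) i) = chain_map n ls (fappf l sval s) i"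
      unfolding ll by (simp add: lessThan_Suc_atMost)
  qed
  finally show ?thesis .
qed

definition sd_delta_map :: "nat \<times> (nat \<times> 'a \<times> bool option list list) \<times> (nat \<Rightarrow> real) \<Rightarrow> nat \<times> 'a \<times> (nat \<Rightarrow> real)" where
  "sd_delta_map z = (case z of (k, (n, x, ls), s) \<Rightarrow> (n, x, chain_map n ls s))"

lemma sd_delta_map_real_rel:
  assumes C: "cube_set C c" and l: "l \<in> sface p k" and z: "z \<in> sd_delta C k" and s: "s \<in> std_simplex p"
  shows "(sd_delta_map (p, sd_delta_act c l z, s), sd_delta_map (k, z, fappf l sval s))
    \<in> real_rel C std_cube cface c (\<lambda>l. fappf l cval)"
proof -
  obtain n x ls where z_eq: "z = (n, x, ls)" by (cases z) auto
  have xC: "x \<in> C n" and k: "length ls = k" and c: "chain n ls" using z z_eq by (auto simp: sd_delta_chain)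
  note A = sd_delta_act_eq[OF C l z[unfolded z_eq]]
  note hs = hits_sface[OF l, folded k]
  have "chain_map (chain_dim n ls (hits l ! p)) (subchain ls (hits l)) s \<in> std_cube (chain_dim n ls (hits l ! p))"
    using chain_map_in_std_cube[OF chain_subchain[OF c hs(1) sorted_hits hs(2)]] s
      length_subchain[OF c hs(1) sorted_hits hs(2)] by simp
  from real_relI[where faces = cface and S = C and shape = std_cube and act = c
      and app = "\<lambda>l. fappf l cval", OF A(2) xC this]
  show ?thesis
    unfolding z_eq A(1) sd_delta_map_def fappf_chain_map_subchain[OF c l[folded k] s] by simp
qed

definition free_level :: "nat \<Rightarrow> bool option list list \<Rightarrow> nat \<Rightarrow> nat" where
  "free_level n ls i = (LEAST j. to_top n ls j ! i = None)"

definition fixed_bit :: "nat \<Rightarrow> bool option list list \<Rightarrow> nat \<Rightarrow> bool" where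
  "fixed_bit n ls i = the (to_top n ls 0 ! i)"

context
  fixes n :: nat and ls :: "bool option list list"
  assumes ch: "chain n ls"
begin

lemma to_top_Some_mono: "j \<le> j' \<Longrightarrow> j' \<le> length ls \<Longrightarrow> i < n \<Longrightarrow> to_top n ls j' ! i = Some b \<Longrightarrow> to_top n ls j ! i = Some b"
proof (induction j rule: inc_induct)
  case base then show ?case by simp
next
  case (step j)
  have "to_top n ls j = fcomp (to_top n ls (Suc j)) (ls ! j)" using to_top_step step by simp
  moreover have "i < length (to_top n ls (Suc j))" using to_top_dims[OF ch, of "Suc j"] step by simp
  ultimately show ?case using fcomp_nth_Some step by simp
qed

lemma to_top_length_None: "i < n \<Longrightarrow> to_top n ls (length ls) ! i = None"
  by (simp add: to_top_beyond)

lemma free_level_le: "i < n \<Longrightarrow> free_level n ls i \<le> length ls"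
  unfolding free_level_def using to_top_length_None by (intro Least_le)

lemma to_top_None_iff: "i < n \<Longrightarrow> j \<le> length ls \<Longrightarrow> to_top n ls j ! i = None \<longleftrightarrow> free_level n ls i \<le> j"
proof
  assume "i < n" "to_top n ls j ! i = None"
  then show "free_level n ls i \<le> j" unfolding free_level_def by (intro Least_le)
next
  assume i: "i < n" and j: "j \<le> length ls" and le: "free_level n ls i \<le> j"
  have mN: "to_top n ls (free_level n ls i) ! i = None" unfolding free_level_def using to_top_length_None[OF i] by (rule LeastI)
  show "to_top n ls j ! i = None"
  proof (rule ccontr)
    assume "to_top n ls j ! i \<noteq> None"
    then obtain b where "to_top n ls j ! i = Some b" by auto
    then have "to_top n ls (free_level n ls i) ! i = Some b" using to_top_Some_mono[OF le j i] by simp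
    then show False using mN by simp
  qed
qed

lemma to_top_Some: "i < n \<Longrightarrow> j < free_level n ls i \<Longrightarrow> to_top n ls j ! i = Some (fixed_bit n ls i)"
proof -
  assume i: "i < n" and j: "j < free_level n ls i"
  have jk: "j \<le> length ls" using j free_level_le[OF i] by simp
  then obtain b where b: "to_top n ls j ! i = Some b" using to_top_None_iff[OF i jk] j by fastforce
  then have "to_top n ls 0 ! i = Some b" using to_top_Some_mono[of 0 j i b] jk i by simp
  then show ?thesis using b unfolding fixed_bit_def by simp
qed

lemma centre_to_top: "i < n \<Longrightarrow> j \<le> length ls \<Longrightarrow> centre (to_top n ls j) i = (if j < free_level n ls i then cval (fixed_bit n ls i) else 1/2)"
proof -
  assume i: "i < n" and j: "j \<le> length ls"
  have len: "i < length (to_top n ls j)" using to_top_dims[OF ch j] i by simp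
  show ?thesis
  proof (cases "j < free_level n ls i")
    case True
    then show ?thesis using to_top_Some[OF i True] fappf_nth_Some[OF len] unfolding centre_def by simp
  next
    case False
    then have "to_top n ls j ! i = None" using to_top_None_iff[OF i j] by simp
    then show ?thesis using False fappf_const_None[OF len] unfolding centre_def by simp
  qed
qed

lemma chain_map_formula:
  assumes s: "s \<in> std_simplex (length ls)" and i: "i < n"
  shows "chain_map n ls s i = (\<Sum>j<free_level n ls i. s j) * cval (fixed_bit n ls i) + (1 - (\<Sum>j<free_level n ls i. s j)) / 2"
proof -
  have s1: "(\<Sum>j\<le>length ls. s j) = 1" using s by (simp add: std_simplex_def)
  have m: "free_level n ls i \<le> length ls" using free_level_le[OF i] .
  have split: "{..length ls} = {..<free_level n ls i} \<union> {free_level n ls i..length ls}" using m by auto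
  have disj: "{..<free_level n ls i} \<inter> {free_level n ls i..length ls} = {}" by auto
  have "chain_map n ls s i = (\<Sum>j\<le>length ls. s j * (if j < free_level n ls i then cval (fixed_bit n ls i) else 1/2))"
    unfolding chain_map_def using centre_to_top[OF i] by (intro sum.cong) auto
  also have "\<dots> = (\<Sum>j<free_level n ls i. s j * cval (fixed_bit n ls i)) + (\<Sum>j\<in>{free_level n ls i..length ls}. s j * (1/2))"
    unfolding split by (subst sum.union_disjoint) (auto intro!: sum.cong)
  also have "(\<Sum>j\<in>{free_level n ls i..length ls}. s j) = 1 - (\<Sum>j<free_level n ls i. s j)"
    using s1 unfolding split by (subst (asm) sum.union_disjoint) auto
  then have "(\<Sum>j\<in>{free_level n ls i..length ls}. s j * (1/2)) = (1 - (\<Sum>j<free_level n ls i. s j)) / 2"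
    by (simp add: sum_divide_distrib[symmetric])
  finally show ?thesis by (simp add: sum_distrib_right)
qed

lemma free_level_surj: "1 \<le> j \<Longrightarrow> j \<le> length ls \<Longrightarrow> \<exists>i<n. free_level n ls i = j"
proof -
  assume j1: "1 \<le> j" and jk: "j \<le> length ls"
  let ?A = "{i. i < n \<and> to_top n ls (j - 1) ! i = None}"
  let ?B = "{i. i < n \<and> to_top n ls j ! i = None}"
  have "chain_dim n ls (j - 1) < chain_dim n ls j" using chain_dim_mono[OF ch, of "j - 1" j] j1 jk by simp
  moreover have "fdim (to_top n ls (j - 1)) = card ?A" "fdim (to_top n ls j) = card ?B"
    using to_top_dims[OF ch, of "j - 1"] to_top_dims[OF ch, of j] jk by (auto simp: fdim_card)
  ultimately have "card ?A < card ?B" using to_top_dims[OF ch, of "j - 1"] to_top_dims[OF ch, of j] jk by simp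
  moreover have "?A \<subseteq> ?B" using to_top_None_iff jk by auto
  moreover have "?B - ?A \<noteq> {}"
  proof
    assume "?B - ?A = {}"
    then have "?B \<subseteq> ?A" by blast
    then have "card ?B \<le> card ?A" by (intro card_mono) auto
    then show False using \<open>card ?A < card ?B\<close> by simp
  qed
  then obtain i where "i \<in> ?B" "i \<notin> ?A" by blast
  then have "i < n" "free_level n ls i \<le> j" "\<not> free_level n ls i \<le> j - 1" using to_top_None_iff jk by auto
  then show ?thesis by (intro exI[of _ i]) auto
qed

end

lemma sum_lessThan_strict_mono: "(\<And>j. j < b \<Longrightarrow> 0 < s j) \<Longrightarrow> a < (b::nat) \<Longrightarrow> (\<Sum>j<a. s j) < (\<Sum>j<b. (s j :: real))"
proof (induction b)
  case 0 then show ?case by simp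
next
  case (Suc b)
  show ?case
  proof (cases "a = b")
    case True then show ?thesis using Suc.prems(1)[of b] by simp
  next
    case False
    then have "(\<Sum>j<a. s j) < (\<Sum>j<b. s j)" using Suc by simp
    then show ?thesis using Suc.prems(1)[of b] by simp
  qed
qed

lemma chain_map_dist_centre:
  assumes c: "chain n ls" and s: "s \<in> std_simplex (length ls)" and i: "i < n"
  shows "\<bar>2 * chain_map n ls s i - 1\<bar> = (\<Sum>j<free_level n ls i. s j)"
proof -
  have "0 \<le> (\<Sum>j<free_level n ls i. s j)" using s free_level_le[OF c i] by (intro sum_nonneg) (auto simp: std_simplex_def)
  then show ?thesis using chain_map_formula[OF c s i] by (cases "fixed_bit n ls i") (auto simp: cval_def field_simps)
qed

lemma strict_mono_on_image_eq:
  fixes g1 g2 :: "nat \<Rightarrow> 'a::linorder"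
  assumes mono: "strict_mono_on {..k1} g1" "strict_mono_on {..k2} g2"
    and img: "g1 ` {..k1} = g2 ` {..k2}"
  shows "k1 = k2" and "\<And>j. j \<le> k1 \<Longrightarrow> g1 j = g2 j"
proof -
  have sorted: "sorted_wrt (<) (map g [0..<Suc k])" if "strict_mono_on {..k} g" for g :: "nat \<Rightarrow> 'a" and k
    using that unfolding sorted_wrt_iff_nth_less by (auto simp: strict_mono_on_def simp del: upt_Suc)
  have "set (map g [0..<Suc k]) = g ` {..k}" for g :: "nat \<Rightarrow> 'a" and k
    by (simp only: set_map set_upt atLeast0LessThan lessThan_Suc_atMost)
  then have L: "map g1 [0..<Suc k1] = map g2 [0..<Suc k2]"
    using sorted[OF mono(1)] sorted[OF mono(2)] img unfolding strict_sorted_iff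
    by (intro sorted_distinct_set_unique) auto
  have "length (map g1 [0..<Suc k1]) = length (map g2 [0..<Suc k2])" using L by (rule arg_cong)
  then show kk: "k1 = k2" by (simp only: length_map length_upt)
  show "g1 j = g2 j" if "j \<le> k1" for j
    using arg_cong[OF L, of "\<lambda>l. l ! j"] that kk by (simp del: upt_Suc)
qed

lemma std_simplex_eq_by_partial_sums:
  assumes s1: "s1 \<in> std_simplex k" and s2: "s2 \<in> std_simplex k"
    and sums: "\<And>j. j \<le> k \<Longrightarrow> (\<Sum>i<j. s1 i) = (\<Sum>i<j. s2 i)"
  shows "s1 = s2"
proof
  fix j
  consider "j < k" | "j = k" | "k < j" by linarith
  then show "s1 j = s2 j"
  proof cases
    case 1
    then show ?thesis using sums[of j] sums[of "Suc j"] by simp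
  next
    case 2
    have "(\<Sum>i<k. s1 i) + s1 k = 1" "(\<Sum>i<k. s2 i) + s2 k = 1"
      using s1 s2 by (simp_all add: std_simplex_def lessThan_Suc_atMost[symmetric])
    then show ?thesis using sums[of k] 2 by simp
  next
    case 3
    then show ?thesis using s1 s2 by (simp add: std_simplex_def)
  qed
qed

lemma partial_sums_image:
  assumes c: "chain n ls" and s: "s \<in> std_simplex (length ls)"
  shows "insert 0 ((\<lambda>i. \<bar>2 * chain_map n ls s i - 1\<bar>) ` {..<n}) = (\<lambda>m. \<Sum>j<m. s j) ` {..length ls}"
proof
  let ?G = "\<lambda>m. \<Sum>j<m. s j"
  have D: "\<bar>2 * chain_map n ls s i - 1\<bar> = ?G (free_level n ls i)" if "i < n" for i
    using chain_map_dist_centre[OF c s that] .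
  show "insert 0 ((\<lambda>i. \<bar>2 * chain_map n ls s i - 1\<bar>) ` {..<n}) \<subseteq> ?G ` {..length ls}"
  proof
    fix v assume "v \<in> insert 0 ((\<lambda>i. \<bar>2 * chain_map n ls s i - 1\<bar>) ` {..<n})"
    then consider "v = 0" | i where "i < n" "v = \<bar>2 * chain_map n ls s i - 1\<bar>" by auto
    then show "v \<in> ?G ` {..length ls}"
    proof cases
      case 1 then show ?thesis by (intro image_eqI[of _ _ 0]) auto
    next
      case 2 then show ?thesis using D free_level_le[OF c] by auto
    qed
  qed
  show "?G ` {..length ls} \<subseteq> insert 0 ((\<lambda>i. \<bar>2 * chain_map n ls s i - 1\<bar>) ` {..<n})"
  proof
    fix v assume "v \<in> ?G ` {..length ls}"
    then obtain j where j: "j \<le> length ls" "v = ?G j" by auto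
    show "v \<in> insert 0 ((\<lambda>i. \<bar>2 * chain_map n ls s i - 1\<bar>) ` {..<n})"
    proof (cases "j = 0")
      case False
      then obtain i where "i < n" "free_level n ls i = j" using free_level_surj[OF c, of j] j by auto
      then show ?thesis using j D by auto
    qed (use j in simp)
  qed
qed

lemma chain_eq_by_levels:
  assumes c1: "chain n ls1" and c2: "chain n ls2" and len: "length ls1 = length ls2"
    and lev: "\<And>i. i < n \<Longrightarrow> free_level n ls1 i = free_level n ls2 i"
    and bit: "\<And>i. i < n \<Longrightarrow> 0 < free_level n ls1 i \<Longrightarrow> fixed_bit n ls1 i = fixed_bit n ls2 i"
  shows "ls1 = ls2"
proof -
  have to_top_eq: "to_top n ls1 j = to_top n ls2 j" if j: "j \<le> length ls1" for j
  proof (rule nth_equalityI)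
    show "length (to_top n ls1 j) = length (to_top n ls2 j)"
      using to_top_dims[OF c1 j] to_top_dims[OF c2] j len by simp
    fix i assume "i < length (to_top n ls1 j)"
    then have i: "i < n" using to_top_dims[OF c1 j] by simp
    show "to_top n ls1 j ! i = to_top n ls2 j ! i"
    proof (cases "j < free_level n ls1 i")
      case True
      then show ?thesis using to_top_Some[OF c1 i True] to_top_Some[OF c2 i] lev[OF i] bit[OF i] by simp
    next
      case False
      then show ?thesis using to_top_None_iff[OF c1 i j] to_top_None_iff[OF c2 i, of j] lev[OF i] j len
        by simp
    qed
  qed
  show ?thesis
  proof (rule nth_equalityI[OF len])
    fix j assume j: "j < length ls1"
    have l1: "length (ls1 ! j) = fdim (to_top n ls1 (Suc j))"
      using length_chain_nth[OF c1 j] to_top_dims[OF c1, of "Suc j"] j by simp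
    have l2: "length (ls2 ! j) = fdim (to_top n ls1 (Suc j))"
      using length_chain_nth[OF c2, of j] to_top_dims[OF c2, of "Suc j"] j len to_top_eq[of "Suc j"]
      by simp
    have "fcomp (to_top n ls1 (Suc j)) (ls1 ! j) = fcomp (to_top n ls1 (Suc j)) (ls2 ! j)"
      using to_top_step[OF j] to_top_step[of j ls2 n] to_top_eq[of j] to_top_eq[of "Suc j"] j len by simp
    then show "ls1 ! j = ls2 ! j" using fcomp_cancel[OF l1 l2] by simp
  qed
qed

lemma chain_map_inj_interior:
  assumes c1: "chain n ls1" and c2: "chain n ls2"
    and s1: "s1 \<in> std_simplex (length ls1)" and s2: "s2 \<in> std_simplex (length ls2)"
    and p1: "\<And>j. j \<le> length ls1 \<Longrightarrow> 0 < s1 j" and p2: "\<And>j. j \<le> length ls2 \<Longrightarrow> 0 < s2 j"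
    and eq: "chain_map n ls1 s1 = chain_map n ls2 s2"
  shows "ls1 = ls2 \<and> s1 = s2"
proof -
  define G1 where "G1 m = (\<Sum>j<m. s1 j)" for m
  define G2 where "G2 m = (\<Sum>j<m. s2 j)" for m
  have "strict_mono_on {..length ls1} G1" "strict_mono_on {..length ls2} G2"
    using p1 p2 unfolding G1_def G2_def
    by (auto simp: strict_mono_on_def intro!: sum_lessThan_strict_mono)
  moreover have "G1 ` {..length ls1} = G2 ` {..length ls2}"
    using partial_sums_image[OF c1 s1] partial_sums_image[OF c2 s2] eq unfolding G1_def G2_def by simp
  ultimately have len: "length ls1 = length ls2" and G: "\<And>j. j \<le> length ls1 \<Longrightarrow> G1 j = G2 j"
    and inj: "inj_on G1 {..length ls1}"
    using strict_mono_on_image_eq strict_mono_on_imp_inj_on by blast+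
  have ss: "s1 = s2"
    using std_simplex_eq_by_partial_sums[of s1 "length ls1" s2] s1 s2 len G unfolding G1_def G2_def
    by simp
  have lev: "free_level n ls1 i = free_level n ls2 i" if i: "i < n" for i
  proof -
    have "G1 (free_level n ls1 i) = G1 (free_level n ls2 i)"
      using chain_map_dist_centre[OF c1 s1 i] chain_map_dist_centre[OF c2 s2 i] eq
        G[of "free_level n ls2 i"] free_level_le[OF c2 i] len
      unfolding G1_def G2_def by simp
    then show ?thesis
      using inj free_level_le[OF c1 i] free_level_le[OF c2 i] len unfolding inj_on_def by auto
  qed
  have "fixed_bit n ls1 i = fixed_bit n ls2 i" if i: "i < n" and pos: "0 < free_level n ls1 i" for i
  proof -
    have g0: "0 < G1 (free_level n ls1 i)"
      using sum_lessThan_strict_mono[of "free_level n ls1 i" s1 0] p1 pos free_level_le[OF c1 i]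
      unfolding G1_def by simp
    have "chain_map n ls1 s1 i = G1 (free_level n ls1 i) * cval (fixed_bit n ls1 i) +
        (1 - G1 (free_level n ls1 i)) / 2"
      using chain_map_formula[OF c1 s1 i] unfolding G1_def .
    moreover have "chain_map n ls2 s2 i = G1 (free_level n ls1 i) * cval (fixed_bit n ls2 i) +
        (1 - G1 (free_level n ls1 i)) / 2"
      using chain_map_formula[OF c2 s2 i] lev[OF i] ss unfolding G1_def by simp
    ultimately have "G1 (free_level n ls1 i) * cval (fixed_bit n ls1 i) =
        G1 (free_level n ls1 i) * cval (fixed_bit n ls2 i)"
      using fun_cong[OF eq, of i] by linarith
    then have "cval (fixed_bit n ls1 i) = cval (fixed_bit n ls2 i)" using g0 by simp
    then show ?thesis by (simp add: cval_def split: if_splits)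
  qed
  then have "ls1 = ls2" using chain_eq_by_levels[OF c1 c2 len lev] by blast
  then show ?thesis using ss by simp
qed

fun factor :: "'c option list \<Rightarrow> 'c option list \<Rightarrow> 'c option list" where
  "factor (None # P) (q # Q) = q # factor P Q"
| "factor (Some _ # P) (q # Q) = factor P Q"
| "factor _ _ = []"

definition refines :: "'c option list \<Rightarrow> 'c option list \<Rightarrow> bool" where
  "refines P Q \<longleftrightarrow> list_all2 (\<lambda>p q. p = None \<or> q = p) P Q"

lemma fcomp_factor:
  "refines P Q \<Longrightarrow> fcomp P (factor P Q) = Q \<and> length (factor P Q) = fdim P \<and> fdim (factor P Q) = fdim Q"
proof (induction P arbitrary: Q)
  case Nil then show ?case by (simp add: refines_def)
next
  case (Cons p P)
  then obtain q Q' where Q: "Q = q # Q'" and r: "p = None \<or> q = p" and r': "refines P Q'"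
    unfolding refines_def by (cases Q) auto
  show ?case
  proof (cases p)
    case None then show ?thesis using Cons.IH[OF r'] Q by (simp add: fdim_Cons)
  next
    case (Some c) then show ?thesis using Cons.IH[OF r'] Q r by simp
  qed
qed
lemma refinesI: "length P = length Q \<Longrightarrow> (\<And>i. i < length P \<Longrightarrow> P ! i = None \<or> Q ! i = P ! i) \<Longrightarrow> refines P Q"
  unfolding refines_def by (simp add: list_all2_conv_all_nth)

lemma chain_dim_ge: "chain n ls \<Longrightarrow> j \<le> length ls \<Longrightarrow> j \<le> chain_dim n ls j"
proof (induction j)
  case 0 then show ?case by simp
next
  case (Suc j) then show ?case using chain_dim_less[of n ls j] by simp
qed
lemma chain_bounds: "chain n ls \<Longrightarrow> length ls \<le> n \<and> (\<forall>l\<in>set ls. length l \<le> n)"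
proof -
  assume c: "chain n ls"
  have "length ls \<le> n" using chain_dim_ge[OF c, of "length ls"] by (simp add: chain_dim_def)
  moreover have "length l \<le> n" if "l \<in> set ls" for l
  proof -
    obtain j where j: "j < length ls" "l = ls ! j" using \<open>l \<in> set ls\<close> by (auto simp: in_set_conv_nth)
    have "chain_dim n ls (Suc j) \<le> chain_dim n ls (length ls)"
      using chain_dim_mono[OF c, of "Suc j" "length ls"] j by (cases "Suc j = length ls") auto
    then show ?thesis using length_chain_nth[OF c j(1)] j by (simp add: chain_dim_def)
  qed
  ultimately show ?thesis by blast
qed

definition level_face :: "nat \<Rightarrow> (nat \<Rightarrow> nat) \<Rightarrow> (nat \<Rightarrow> bool) \<Rightarrow> nat \<Rightarrow> bool option list" where
  "level_face n lev b j = map (\<lambda>i. if j < lev i then Some (b i) else None) [0..<n]"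

definition level_chain :: "nat \<Rightarrow> (nat \<Rightarrow> nat) \<Rightarrow> (nat \<Rightarrow> bool) \<Rightarrow> nat \<Rightarrow> bool option list list" where
  "level_chain n lev b k = map (\<lambda>j. factor (level_face n lev b (Suc j)) (level_face n lev b j)) [0..<k]"

lemma level_chain:
  assumes le: "\<forall>i<n. lev i \<le> k" and surj: "\<forall>j. 0 < j \<and> j \<le> k \<longrightarrow> (\<exists>i<n. lev i = j)"
  shows "chain n (level_chain n lev b k)" "length (level_chain n lev b k) = k"
    "\<And>j. j \<le> k \<Longrightarrow> to_top n (level_chain n lev b k) j = level_face n lev b j"
proof -
  let ?M = "level_face n lev b" and ?ls = "level_chain n lev b k"
  have lenM: "length (?M j) = n" for j by (simp add: level_face_def)
  have Mnth: "?M j ! i = (if j < lev i then Some (b i) else None)" if "i < n" for i j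
    using that by (simp add: level_face_def)
  have ref: "refines (?M (Suc j)) (?M j)" for j
    by (rule refinesI) (auto simp: lenM Mnth)
  have lsj: "?ls ! j = factor (?M (Suc j)) (?M j)" if "j < k" for j
    using that by (simp add: level_chain_def)
  show lenls: "length ?ls = k" by (simp add: level_chain_def)
  have Mk: "?M k = replicate n None"
    using le by (intro nth_equalityI) (auto simp: lenM Mnth not_less)
  have fdim_lt: "fdim (?M j) < fdim (?M (Suc j))" if j: "j < k" for j
  proof -
    have "fdim (?M j) = card {i. i < n \<and> lev i \<le> j}" for j
      unfolding fdim_card lenM by (rule arg_cong[where f = card]) (auto simp: Mnth split: if_splits)
    moreover obtain i where "i < n" "lev i = Suc j" using surj[rule_format, of "Suc j"] j by auto
    then have "i \<in> {i. i < n \<and> lev i \<le> Suc j} - {i. i < n \<and> lev i \<le> j}" by simp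
    then have "{i. i < n \<and> lev i \<le> j} \<subset> {i. i < n \<and> lev i \<le> Suc j}" by auto
    ultimately show ?thesis by (simp add: psubset_card_mono)
  qed
  show "chain n ?ls"
    unfolding chain_def lenls
  proof (intro conjI allI impI)
    fix j assume j: "j < k"
    show "fdim (?ls ! j) < length (?ls ! j)" using fcomp_factor[OF ref[of j]] fdim_lt[OF j] lsj[OF j] by simp
  next
    fix j assume j: "Suc j < k"
    show "length (?ls ! j) = fdim (?ls ! Suc j)"
      using fcomp_factor[OF ref[of j]] fcomp_factor[OF ref[of "Suc j"]] lsj j by simp
  next
    assume k0: "0 < k"
    have "length (?ls ! (k - 1)) = fdim (?M k)" using fcomp_factor[OF ref[of "k - 1"]] lsj[of "k - 1"] k0 by simp
    then show "length (?ls ! (k - 1)) = n" unfolding Mk by simp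
  qed
  show "to_top n ?ls j = ?M j" if "j \<le> k" for j
    using that
  proof (induction rule: inc_induct)
    case base then show ?case using to_top_beyond[of ?ls k n] lenls Mk by simp
  next
    case (step j)
    have "to_top n ?ls j = fcomp (to_top n ?ls (Suc j)) (?ls ! j)" using to_top_step[of j ?ls n] step lenls by simp
    then show ?case using step fcomp_factor[OF ref[of j]] lsj[of j] by simp
  qed
qed

lemma free_level_level_chain:
  assumes le: "\<forall>i<n. lev i \<le> k" and surj: "\<forall>j. 0 < j \<and> j \<le> k \<longrightarrow> (\<exists>i<n. lev i = j)"
    and i: "i < n"
  shows "free_level n (level_chain n lev b k) i = lev i"
  unfolding free_level_def
proof (rule Least_equality)
  note to_top = level_chain(3)[OF le surj]
  show "to_top n (level_chain n lev b k) (lev i) ! i = None"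
    using to_top[of "lev i"] le i by (simp add: level_face_def)
  fix j assume j: "to_top n (level_chain n lev b k) j ! i = None"
  show "lev i \<le> j"
  proof (cases "j \<le> k")
    case True then show ?thesis using j to_top[OF True] i by (auto simp: level_face_def split: if_splits)
  qed (use le i in auto)
qed

lemma fixed_bit_level_chain:
  assumes le: "\<forall>i<n. lev i \<le> k" and surj: "\<forall>j. 0 < j \<and> j \<le> k \<longrightarrow> (\<exists>i<n. lev i = j)"
    and i: "i < n" "0 < lev i"
  shows "fixed_bit n (level_chain n lev b k) i = b i"
  using level_chain(3)[OF le surj, where j = 0] i by (simp add: fixed_bit_def level_face_def)

lemma finite_strict_mono_enumeration:
  fixes V :: "'a::linorder set"
  assumes "finite V" "V \<noteq> {}"
  obtains k :: nat and g :: "nat \<Rightarrow> 'a" where "strict_mono_on {..k} g" "g ` {..k} = V"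
proof -
  define L where "L = sorted_list_of_set V"
  have setL: "set L = V" and sL: "sorted_wrt (<) L"
    unfolding L_def using assms(1) by (simp_all add: strict_sorted_list_of_set)
  have lenL: "length L = Suc (length L - 1)" using setL assms(2) by (cases L) auto
  have "strict_mono_on {..length L - 1} ((!) L)"
    unfolding strict_mono_on_def using sorted_wrt_nth_less[OF sL] lenL by (metis atMost_iff le_imp_less_Suc)
  moreover have "(!) L ` {..<length L} = V" using setL by (auto simp: in_set_conv_nth)
  then have "(!) L ` {..length L - 1} = V" using lenL by (metis lessThan_Suc_atMost)
  ultimately show ?thesis by (rule that)
qed

lemma increments_std_simplex:
  fixes g :: "nat \<Rightarrow> real"
  assumes mono: "strict_mono_on {..k} g" and g0: "g 0 = 0" and gk: "g k \<le> 1"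
  defines "s \<equiv> \<lambda>j. if j < k then g (Suc j) - g j else if j = k then 1 - g k else 0"
  shows "s \<in> std_simplex k" and "\<And>q. q \<le> k \<Longrightarrow> (\<Sum>j<q. s j) = g q"
proof -
  show sums: "(\<Sum>j<q. s j) = g q" if "q \<le> k" for q
  proof -
    have "(\<Sum>j<q. s j) = (\<Sum>j<q. g (Suc j) - g j)" using that unfolding s_def by (intro sum.cong) auto
    then show ?thesis using g0 by (simp add: sum_lessThan_telescope)
  qed
  have "0 \<le> s j" for j
    using mono gk unfolding s_def strict_mono_on_def by (auto simp: less_imp_le)
  moreover have "(\<Sum>j\<le>k. s j) = 1" using sums[of k] by (simp add: lessThan_Suc_atMost[symmetric] s_def)
  ultimately show "s \<in> std_simplex k" unfolding std_simplex_def s_def by auto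
qed

lemma cube_point_levels:
  fixes t :: "nat \<Rightarrow> real"
  assumes t01: "\<forall>i<n. 0 \<le> t i \<and> t i \<le> 1"
  obtains k :: nat and g :: "nat \<Rightarrow> real" and lev :: "nat \<Rightarrow> nat"
  where "strict_mono_on {..k} g" "g 0 = 0" "g k \<le> 1"
    "\<forall>i<n. lev i \<le> k \<and> g (lev i) = \<bar>2 * t i - 1\<bar>"
    "\<forall>j. 0 < j \<and> j \<le> k \<longrightarrow> (\<exists>i<n. lev i = j)"
proof -
  define D where "D i = \<bar>2 * t i - 1\<bar>" for i
  define V where "V = insert 0 (D ` {..<n})"
  have V01: "0 \<le> v \<and> v \<le> 1" if "v \<in> V" for v
    using that t01 unfolding V_def D_def by (auto simp: abs_if)
  have "finite V" "V \<noteq> {}" unfolding V_def by auto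
  then obtain k :: nat and g :: "nat \<Rightarrow> real" where mono: "strict_mono_on {..k} g" and gV: "g ` {..k} = V"
    by (rule finite_strict_mono_enumeration)
  have g0: "g 0 = 0"
  proof -
    have "0 \<in> g ` {..k}" using gV unfolding V_def by simp
    then obtain j0 where j0: "j0 \<le> k" "g j0 = 0" by auto
    have "0 \<le> g 0" using V01 gV by auto
    moreover have "g 0 \<le> g j0" using strict_mono_onD[OF mono, of 0 j0] j0 by (cases j0) auto
    ultimately show ?thesis using j0 by simp
  qed
  define lev where "lev i = inv_into {..k} g (D i)" for i
  have lev: "lev i \<le> k \<and> g (lev i) = D i" if "i < n" for i
  proof -
    have Di: "D i \<in> g ` {..k}" using gV that unfolding V_def by simp
    show ?thesis using inv_into_into[OF Di] f_inv_into_f[OF Di] unfolding lev_def by simp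
  qed
  have surj: "\<exists>i<n. lev i = j" if j: "0 < j \<and> j \<le> k" for j
  proof -
    have "g j \<in> V" using gV j by auto
    moreover have "g 0 < g j" using strict_mono_onD[OF mono, of 0 j] j by simp
    ultimately obtain i where "i < n" "D i = g j" using g0 unfolding V_def by auto
    moreover have "inj_on g {..k}" using mono strict_mono_on_imp_inj_on by blast
    ultimately show ?thesis using inv_into_f_f[of g "{..k}" j] j unfolding lev_def by auto
  qed
  have "g k \<le> 1" using V01 gV by auto
  then show ?thesis using that mono g0 lev surj unfolding D_def by blast
qed

lemma chain_map_surj:
  assumes t: "t \<in> std_cube n"
  shows "\<exists>ls s. chain n ls \<and> s \<in> std_simplex (length ls) \<and> chain_map n ls s = t"
proof -
  have "\<forall>i<n. 0 \<le> t i \<and> t i \<le> 1" using t by (simp add: std_cube_def)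
  then obtain k :: nat and g :: "nat \<Rightarrow> real" and lev :: "nat \<Rightarrow> nat"
    where mono: "strict_mono_on {..k} g" and g0: "g 0 = 0" and gk: "g k \<le> 1"
      and lev: "\<forall>i<n. lev i \<le> k \<and> g (lev i) = \<bar>2 * t i - 1\<bar>"
      and surj: "\<forall>j. 0 < j \<and> j \<le> k \<longrightarrow> (\<exists>i<n. lev i = j)"
    by (rule cube_point_levels)
  have le: "\<forall>i<n. lev i \<le> k" using lev by blast
  define b where "b i = (1/2 < t i)" for i
  define ls where "ls = level_chain n lev b k"
  note chain = level_chain[OF le surj, where b = b, folded ls_def]
  define s where "s j = (if j < k then g (Suc j) - g j else if j = k then 1 - g k else 0)" for j
  note s = increments_std_simplex[OF mono g0 gk, folded s_def]
  have "chain_map n ls s i = t i" for i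
  proof (cases "i < n")
    case False
    then show ?thesis using chain_map_in_std_cube[OF chain(1)] s(1) chain(2) t by (simp add: std_cube_def)
  next
    case True
    have P: "chain_map n ls s i = \<bar>2 * t i - 1\<bar> * cval (fixed_bit n ls i) + (1 - \<bar>2 * t i - 1\<bar>) / 2"
      using chain_map_formula[OF chain(1) _ True, of s] s chain(2) lev True
        free_level_level_chain[OF le surj True, of b] unfolding ls_def by simp
    show ?thesis
    proof (cases "lev i = 0")
      case True
      then have h: "\<bar>2 * t i - 1\<bar> = 0" using lev \<open>i < n\<close> g0 by auto
      then have "t i = 1/2" by simp
      moreover have "chain_map n ls s i = 1/2" using P unfolding h by simp
      ultimately show ?thesis by linarith
    next
      case False
      then have "fixed_bit n ls i = (1/2 < t i)"
        using fixed_bit_level_chain[OF le surj \<open>i < n\<close>] unfolding ls_def b_def by simp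
      then show ?thesis using P by (cases "1/2 < t i") (simp_all add: cval_def field_simps)
    qed
  qed
  then show ?thesis using chain s(1) by blast
qed

lemma sd_delta_interior_rep:
  assumes C: "cube_set C c" and a: "a \<in> real_total (sd_delta C) std_simplex"
  shows "\<exists>p z s'. (p, z, s') \<in> real_total (sd_delta C) std_simplex \<and> (\<forall>j\<le>p. 0 < s' j) \<and>
     ((p, z, s'), a) \<in> real_rel (sd_delta C) std_simplex sface (sd_delta_act c) (\<lambda>l. fappf l sval)"
proof -
  obtain k z s where a_eq: "a = (k, z, s)" and z: "z \<in> sd_delta C k" and s: "s \<in> std_simplex k"
    using a by (auto simp: real_total_def)
  define lam where "lam = carrier_face sval_inv (k + 1) s"
  define s' where "s' = carrier_coords sval_inv (k + 1) s"
  have ge: "1 \<le> fdim lam" and lf: "lam \<in> sface (fdim lam - 1) k" and s'S: "s' \<in> std_simplex (fdim lam - 1)"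
    using carrier_std_simplex[OF s] unfolding lam_def s'_def by auto
  have van: "\<forall>i\<ge>k + 1. s i = 0" using s by (simp add: std_simplex_def)
  have r: "((fdim lam - 1, sd_delta_act c lam z, s'), (k, z, s))
     \<in> real_rel (sd_delta C) std_simplex (faces_of 1) (sd_delta_act c) (\<lambda>l. fappf l sval)"
    unfolding lam_def s'_def
    by (rule carrier_real_rel[where S = "sd_delta C" and k = 1, OF sval_sval_inv _ _ z van]) (use lf s'S lam_def s'_def in simp_all)
  have v: "sd_delta_act c lam z \<in> sd_delta C (fdim lam - 1)" using sd_delta_act_closed[OF C lf z] .
  have int: "0 < s' j" if "j \<le> fdim lam - 1" for j
  proof -
    have "j < fdim lam" using that ge by simp
    then have "sval_inv (s' j) = None" unfolding s'_def lam_def using carrier_coords_interior by blast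
    moreover have "0 \<le> s' j" using s'S that by (simp add: std_simplex_def)
    ultimately show ?thesis by (auto simp: sval_inv_None)
  qed
  show ?thesis using r v s'S int unfolding a_eq
    by (intro exI[of _ "fdim lam - 1"] exI[of _ "sd_delta_act c lam z"] exI[of _ s']) (simp add: real_total_def)
qed

lemma carrier_normal_sd_delta_map:
  assumes C: "cube_set C c" and a: "(p, (n, x, ls), s) \<in> real_total (sd_delta C) std_simplex"
    and int: "\<And>j. j \<le> p \<Longrightarrow> 0 < s j"
  shows "carrier_normal 0 cval_inv c (sd_delta_map (p, (n, x, ls), s)) = sd_delta_map (p, (n, x, ls), s)"
proof -
  have xC: "x \<in> C n" and lp: "length ls = p" and ch: "chain n ls" and sS: "s \<in> std_simplex p"
    using a by (auto simp: real_total_def sd_delta_chain)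
  have sS': "s \<in> std_simplex (length ls)" using sS lp by simp
  have s1: "(\<Sum>j<p. s j) + s p = 1" using sS by (simp add: std_simplex_def lessThan_Suc_atMost[symmetric])
  have s0: "0 \<le> s j" for j using sS by (cases "j \<le> p") (auto simp: std_simplex_def)
  have inner: "0 < chain_map n ls s i \<and> chain_map n ls s i < 1" if i: "i < n" for i
  proof -
    define g where "g = (\<Sum>j<free_level n ls i. s j)"
    have g0: "0 \<le> g" unfolding g_def using s0 by (intro sum_nonneg) auto
    have "g \<le> (\<Sum>j<p. s j)" unfolding g_def using free_level_le[OF ch i] lp s0 by (intro sum_mono2) auto
    then have g1: "g < 1" using s1 int[of p] by simp
    have P: "chain_map n ls s i = g * cval (fixed_bit n ls i) + (1 - g) / 2" unfolding g_def using chain_map_formula[OF ch sS' i] .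
    show ?thesis using P g0 g1 by (cases "fixed_bit n ls i") (auto simp: cval_def field_simps)
  qed
  have "carrier_normal 0 cval_inv c (n, x, chain_map n ls s) = (n, x, chain_map n ls s)"
  proof (rule carrier_normal_interior)
    show "presheaf 0 C c" using C by (simp add: cube_set_def)
    show "x \<in> C n" using xC .
    fix i assume "i < n + 0"
    then show "cval_inv (chain_map n ls s i) = None" using inner[of i] by (auto simp: cval_inv_None)
  next
    show "\<forall>i\<ge>n + 0. chain_map n ls s i = 0" using chain_map_in_std_cube[OF ch sS'] by (simp add: std_cube_def)
  qed
  then show ?thesis by (simp add: sd_delta_map_def)
qed

lemma sd_delta_map_reflects:
  assumes C: "cube_set C c"
    and a: "a \<in> real_total (sd_delta C) std_simplex" and b: "b \<in> real_total (sd_delta C) std_simplex"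
    and r: "(sd_delta_map a, sd_delta_map b) \<in> real_rel C std_cube cface c (\<lambda>l. fappf l cval)"
  shows "(a, b) \<in> real_rel (sd_delta C) std_simplex sface (sd_delta_act c) (\<lambda>l. fappf l sval)"
proof (rule reflect_by_normal_forms[OF equiv_real_rel equiv_real_rel _ _ _ _ _ a b r,
      where P = "\<lambda>(p, z, s). (p, z, s) \<in> real_total (sd_delta C) std_simplex \<and> (\<forall>j\<le>p. 0 < s j)"
      and \<kappa> = "carrier_normal 0 cval_inv c"])
  show "(sd_delta_map a, sd_delta_map b) \<in> real_rel C std_cube cface c (\<lambda>l. fappf l cval)"
    if "(a, b) \<in> real_rel (sd_delta C) std_simplex sface (sd_delta_act c) (\<lambda>l. fappf l sval)" for a b
    using real_rel_map[OF that sd_delta_map_real_rel[OF C] equiv_real_rel] .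
  show "\<exists>a'. (case a' of (p, z, s) \<Rightarrow> (p, z, s) \<in> real_total (sd_delta C) std_simplex \<and> (\<forall>j\<le>p. 0 < s j)) \<and>
      (a', a) \<in> real_rel (sd_delta C) std_simplex sface (sd_delta_act c) (\<lambda>l. fappf l sval)"
    if "a \<in> real_total (sd_delta C) std_simplex" for a
    using sd_delta_interior_rep[OF C that] by fastforce
  show "carrier_normal 0 cval_inv c u = carrier_normal 0 cval_inv c v"
    if "(u, v) \<in> real_rel C std_cube cface c (\<lambda>l. fappf l cval)" for u v
    using C that cval_inv_cval
    by (intro carrier_normal_real_rel[where v = cval]) (auto simp: cube_set_def)
  show "carrier_normal 0 cval_inv c (sd_delta_map a) = sd_delta_map a"
    if "case a of (p, z, s) \<Rightarrow> (p, z, s) \<in> real_total (sd_delta C) std_simplex \<and> (\<forall>j\<le>p. 0 < s j)" for a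
    using that carrier_normal_sd_delta_map[OF C] by (auto split: prod.splits)
  show "a = b"
    if "case a of (p, z, s) \<Rightarrow> (p, z, s) \<in> real_total (sd_delta C) std_simplex \<and> (\<forall>j\<le>p. 0 < s j)"
      and "case b of (p, z, s) \<Rightarrow> (p, z, s) \<in> real_total (sd_delta C) std_simplex \<and> (\<forall>j\<le>p. 0 < s j)"
      and eq: "sd_delta_map a = sd_delta_map b" for a b
  proof -
    obtain p n1 x1 ls1 s1 q n2 x2 ls2 s2
      where ab: "a = (p, (n1, x1, ls1), s1)" "b = (q, (n2, x2, ls2), s2)"
      by (metis prod_cases3)
    have c1: "chain n1 ls1" "length ls1 = p" "s1 \<in> std_simplex p" "\<forall>j\<le>p. 0 < s1 j"
      and c2: "chain n2 ls2" "length ls2 = q" "s2 \<in> std_simplex q" "\<forall>j\<le>q. 0 < s2 j"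
      using that(1,2) unfolding ab by (auto simp: real_total_def sd_delta_chain)
    have e: "n1 = n2" "x1 = x2" "chain_map n1 ls1 s1 = chain_map n2 ls2 s2"
      using eq unfolding ab sd_delta_map_def by auto
    then have "ls1 = ls2 \<and> s1 = s2"
      using chain_map_inj_interior[OF c1(1), of ls2 s1 s2] c1 c2 by simp
    then show ?thesis using ab e c1(2) c2(2) by simp
  qed
qed

lemma finite_sd_delta_fibre:
  "finite {(k, z). z \<in> sd_delta C k \<and> (fst z, fst (snd z)) = (n, x)}"
proof (rule finite_subset)
  let ?Ls = "{ls. set ls \<subseteq> {l :: bool option list. set l \<subseteq> UNIV \<and> length l \<le> n} \<and> length ls \<le> n}"
  show "{(k, z). z \<in> sd_delta C k \<and> (fst z, fst (snd z)) = (n, x)} \<subseteq> (\<lambda>ls. (length ls, (n, x, ls))) ` ?Ls"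
    using chain_bounds by (force simp: sd_delta_chain)
  show "finite ((\<lambda>ls. (length ls, (n, x, ls))) ` ?Ls)"
    by (intro finite_imageI finite_lists_length_le) auto
qed

lemma cell_map_sd_delta:
  assumes C: "cube_set C c"
  shows "cell_map (sd_delta C) std_simplex sface (sd_delta_act c) (\<lambda>l. fappf l sval) C std_cube cface c (\<lambda>l. fappf l cval)
    (\<lambda>k z. (fst z, fst (snd z))) (\<lambda>k z s. chain_map (fst z) (snd (snd z)) s) sd_delta_map"
proof (unfold_locales)
  show "sd_delta_map (k, z, s) = (fst (fst z, fst (snd z)), snd (fst z, fst (snd z)), chain_map (fst z) (snd (snd z)) s)" for k z s
    by (cases z) (simp add: sd_delta_map_def)
  show "sd_delta_act c l z \<in> sd_delta C p \<and> fappf l sval s \<in> std_simplex k"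
    if "l \<in> sface p k" "z \<in> sd_delta C k" "s \<in> std_simplex p" for p k l z s
    using sd_delta_act_closed[OF C that(1,2)] fappf_std_simplex[OF that(1,3)] by simp
  show "c l x \<in> C p \<and> fappf l cval t \<in> std_cube n"
    if "l \<in> cface p n" "x \<in> C n" "t \<in> std_cube p" for p n l x t
    using C that fappf_std_cube[OF that(1,3)] unfolding cube_set_def presheaf_def by blast
  show "snd (fst z, fst (snd z)) \<in> C (fst (fst z, fst (snd z)))" if "z \<in> sd_delta C k" for k z
    using that by (cases z) (auto simp: sd_delta_chain)
  show "chain_map (fst z) (snd (snd z)) s \<in> std_cube (fst (fst z, fst (snd z)))"
    if "z \<in> sd_delta C k" "s \<in> std_simplex k" for k z s
    using that chain_map_in_std_cube by (cases z) (auto simp: sd_delta_chain)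
  show "continuous_on (std_simplex k) (\<lambda>s. chain_map (fst z) (snd (snd z)) s)" for k z
    using continuous_on_chain_map continuous_on_subset by blast
  show "(sd_delta_map (p, sd_delta_act c l z, s), sd_delta_map (k, z, fappf l sval s))
      \<in> real_rel C std_cube cface c (\<lambda>l. fappf l cval)"
    if "l \<in> sface p k" "z \<in> sd_delta C k" "s \<in> std_simplex p" for p k l z s
    using sd_delta_map_real_rel[OF C that] .
  show "(a, b) \<in> real_rel (sd_delta C) std_simplex sface (sd_delta_act c) (\<lambda>l. fappf l sval)"
    if "a \<in> real_total (sd_delta C) std_simplex" "b \<in> real_total (sd_delta C) std_simplex"
      "(sd_delta_map a, sd_delta_map b) \<in> real_rel C std_cube cface c (\<lambda>l. fappf l cval)" for a b
    using sd_delta_map_reflects[OF C that] .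
  show "finite {(k, z). z \<in> sd_delta C k \<and> (fst z, fst (snd z)) = (m, y)}" for m y
    by (rule finite_sd_delta_fibre)
  show "\<exists>k z s. z \<in> sd_delta C k \<and> (fst z, fst (snd z)) = (m, y) \<and> s \<in> std_simplex k \<and>
      chain_map (fst z) (snd (snd z)) s = u"
    if y: "y \<in> C m" and u: "u \<in> std_cube m" for m y u
  proof -
    obtain ls s where "chain m ls" "s \<in> std_simplex (length ls)" "chain_map m ls s = u"
      using chain_map_surj[OF u] by blast
    then show ?thesis using y
      by (intro exI[of _ "length ls"] exI[of _ "(m, y, ls)"] exI[of _ s]) (simp add: sd_delta_chain)
  qed
  show "compact (std_simplex n)" for n by (rule compact_std_simplex)
qed

theorem cube_real_homeomorphic_sd_delta:
  assumes C: "cube_set C c"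
  shows "cube_real C c homeomorphic_space delta_real (sd_delta C) (sd_delta_act c)"
  using cell_map.realisation_homeomorphic_space[OF cell_map_sd_delta[OF C]] homeomorphic_space_sym
  unfolding cube_real_def delta_real_def by blast

theorem proposition1p2:
  shows "(\<forall>(X :: nat \<Rightarrow> 'a set) d. delta_set X d \<longrightarrow>
            delta_real X d homeomorphic_space cube_real (sd_box X) (sd_box_act d)) \<and>
         (\<forall>(C :: nat \<Rightarrow> 'b set) c. cube_set C c \<longrightarrow>
            cube_real C c homeomorphic_space delta_real (sd_delta C) (sd_delta_act c))"
  using delta_real_homeomorphic_sd_box cube_real_homeomorphic_sd_delta by blast

end
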